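(* Let $\alpha$ be irrational and $v$ holomorphic and bounded on $\mathbb{T}_h$ and real-valued on $\mathbb{T}$. Then: (1) for every $E\in\mathbb{C}\setminus\mathbb{R}$, $\omega^+(E,\mathrm{i}0)=\omega^-(E,\mathrm{i}0)=0$; (2) for every $|y|<h$, $\mathcal{Z}_{L,y}:=\{E\in\mathbb{C}: L(E,\mathrm{i}y)=0\}\subset\mathbb{R}$.
   Context: $\mathbb{T}=\mathbb{R}/2\pi\mathbb{Z}$, $\mathbb{T}_h=\{x+\mathrm{i}y:x\in\mathbb{T},|y|<h\}$; $\alpha$ irrational means $k\alpha\notin2\pi\mathbb{Z}$ for nonzero integers $k$. $S_{E,v}(z)=\begin{pmatrix}E-v(z)&-1\\1&0\end{pmatrix}$, $M_n(E,z)=S_{E,v}(z+n\alpha)\cdots S_{E,v}(z+\alpha)$, $L(E,\mathrm{i}y)=\lim_n\frac1{2\pi}\int_{\mathbb{T}}\frac1n\log\|M_n(E,x+\mathrm{i}y)\|\mathrm{d}x$, which is convex and piecewise linear in $y\in(-h,h)$; $\omega^{\pm}(E,\mathrm{i}y)=\lim_{\epsilon\to0^\pm}\frac1\epsilon(L(E,\mathrm{i}(y+\epsilon))-L(E,\mathrm{i}y))$ are its right/left derivatives in $y$. *)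

theory Defs
  imports "HOL-Analysis.Analysis"
begin

definition Smat :: "(complex \<Rightarrow> complex) \<Rightarrow> complex \<Rightarrow> complex \<Rightarrow> complex^2^2" where
  "Smat v E z = vector [vector [E - v z, -1], vector [1, 0]]"

fun Mn :: "(complex \<Rightarrow> complex) \<Rightarrow> real \<Rightarrow> nat \<Rightarrow> complex \<Rightarrow> complex \<Rightarrow> complex^2^2" where
  "Mn v \<alpha> 0 E z = mat 1"
| "Mn v \<alpha> (Suc n) E z = Smat v E (z + of_real (real (Suc n) * \<alpha>)) ** Mn v \<alpha> n E z"

definition mat_opnorm :: "complex^2^2 \<Rightarrow> real" where
  "mat_opnorm A = onorm (\<lambda>x. A *v x)"

text \<open>Complexified Lyapunov exponent L(E, i y).\<close>
definition Lyap :: "(complex \<Rightarrow> complex) \<Rightarrow> real \<Rightarrow> complex \<Rightarrow> real \<Rightarrow> real" where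
  "Lyap v \<alpha> E y = lim (\<lambda>n. (1 / (2 * pi)) *
      integral {0..2*pi} (\<lambda>x. (1 / real n) * ln (mat_opnorm (Mn v \<alpha> n E (Complex x y)))))"

text \<open>The strip T_h (as a subset of C; periodicity is imposed separately).\<close>
definition strip :: "real \<Rightarrow> complex set" where
  "strip h = {z. \<bar>Im z\<bar> < h}"

end

theory Submission
  imports Defs "HOL-Complex_Analysis.Complex_Analysis"
begin

text \<open>For \<open>E \<notin> \<real>\<close> and \<open>|Im z|\<close> small, \<open>E - v(z)\<close> lies in a half-plane \<open>\<sigma> Im \<ge> c > 0\<close>, so the
  projective action \<open>w \<mapsto> E - v - 1/w\<close> of the transfer matrices maps this half-plane into itself and
  contracts its hyperbolic metric. Hence \<open>log \<parallel>M\<^sub>n(z)\<parallel>\<close> equals \<open>\<Sum>\<^sub>j log |r\<^sub>j(z)|\<close> up to a bounded error,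
  where the Riccati iterates \<open>r\<^sub>j\<close> are holomorphic, periodic and zero-free in \<open>z\<close>; so the mean of
  \<open>log |r\<^sub>j|\<close> over a horizontal period does not depend on \<open>Im z\<close>, and \<open>L(E, iy)\<close> is constant for small
  \<open>|y|\<close>, which gives (1). A monotone symplectic quantity shows \<open>L(E, 0) > 0\<close>. Finally \<open>y \<mapsto> L(E, iy)\<close> is
  convex on \<open>(-h, h)\<close>, being a limit of means of \<open>log \<Sum>|m\<^sub>i\<^sub>j|\<^sup>2\<close> for holomorphic entries \<open>m\<^sub>i\<^sub>j\<close>, whose
  Laplacian is nonnegative; its local minimum at \<open>0\<close> is therefore global, which gives (2).\<close>

section \<open>Two-by-two complex matrices\<close>

lemma power2_norm_vec: "(norm (x::'a::real_normed_vector^'n))^2 = (\<Sum>i\<in>UNIV. (norm (x$i))^2)"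
  by (simp add: norm_vec_def L2_set_def sum_nonneg)

lemma norm_matrix_vector_mult_le:
  fixes A :: "'a::real_normed_field^'n^'m"
  shows "norm (A *v x) \<le> norm A * norm x"
proof -
  have row: "(norm ((A *v x)$i))^2 \<le> (norm (A$i))^2 * (norm x)^2" for i
  proof -
    have "norm ((A *v x)$i) \<le> (\<Sum>j\<in>UNIV. norm (A$i$j) * norm (x$j))"
      unfolding matrix_vector_mult_def by (auto intro!: order_trans[OF norm_sum] simp: norm_mult)
    hence "(norm ((A *v x)$i))^2 \<le> (\<Sum>j\<in>UNIV. norm (A$i$j) * norm (x$j))^2"
      by (simp add: power_mono)
    also have "\<dots> \<le> (\<Sum>j\<in>UNIV. (norm (A$i$j))^2) * (\<Sum>j\<in>UNIV. (norm (x$j))^2)"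
      by (rule Cauchy_Schwarz_ineq_sum)
    finally show ?thesis by (simp add: power2_norm_vec)
  qed
  have "(norm (A *v x))^2 \<le> (norm A * norm x)^2"
    unfolding power2_norm_vec[of "A *v x"] power_mult_distrib power2_norm_vec[of A] sum_distrib_right
    by (rule sum_mono) (rule row)
  thus ?thesis by (rule power2_le_imp_le) simp
qed

lemma norm_vec2_eq: "norm (x::complex^2) = sqrt ((cmod (x$1))^2 + (cmod (x$2))^2)"
  by (simp add: norm_vec_def L2_set_def sum_2)

lemma norm_mat2_eq: "norm (A::complex^2^2) =
   sqrt ((cmod (A$1$1))^2 + (cmod (A$1$2))^2 + (cmod (A$2$1))^2 + (cmod (A$2$2))^2)"
  by (simp add: norm_vec_def L2_set_def sum_2 add.assoc)

lemma matrix_vector_mult_2: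
  "((A::complex^2^2) *v x)$1 = A$1$1 * x$1 + A$1$2 * x$2"
  "((A::complex^2^2) *v x)$2 = A$2$1 * x$1 + A$2$2 * x$2"
  by (simp_all add: matrix_vector_mult_def sum_2)

lemma matrix_matrix_mult_2: "((A::complex^2^2) ** B)$i$j = A$i$1 * B$1$j + A$i$2 * B$2$j"
  by (simp add: matrix_matrix_mult_def sum_2)

lemma mat_opnorm_nonneg: "0 \<le> mat_opnorm A"
  unfolding mat_opnorm_def by (rule onorm_pos_le[OF matrix_vector_mul_bounded_linear])

lemma norm_mult_vector_le_mat_opnorm: "norm (A *v x) \<le> mat_opnorm A * norm x"
  unfolding mat_opnorm_def by (rule onorm[OF matrix_vector_mul_bounded_linear])

lemma mat_opnorm_le_norm: "mat_opnorm A \<le> norm A"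
  unfolding mat_opnorm_def by (rule onorm_le) (simp add: norm_matrix_vector_mult_le)

lemma mat_opnorm_mult_le: "mat_opnorm (A ** B) \<le> mat_opnorm A * mat_opnorm B"
proof -
  have "(\<lambda>x. (A ** B) *v x) = (\<lambda>x. A *v x) \<circ> (\<lambda>x. B *v x)"
    by (simp add: fun_eq_iff matrix_vector_mul_assoc)
  thus ?thesis
    unfolding mat_opnorm_def
    using onorm_compose[OF matrix_vector_mul_bounded_linear matrix_vector_mul_bounded_linear] by simp
qed

lemma mat_opnorm_diff_le: "mat_opnorm A - mat_opnorm B \<le> norm (A - B)"
proof -
  have "mat_opnorm A \<le> mat_opnorm B + mat_opnorm (A - B)"
    unfolding mat_opnorm_def
    using onorm_triangle[OF matrix_vector_mul_bounded_linear matrix_vector_mul_bounded_linear, of B "A - B"]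
    by (simp add: matrix_vector_mult_diff_rdistrib)
  thus ?thesis using mat_opnorm_le_norm[of "A - B"] by linarith
qed

lemma continuous_on_mat_opnorm: "continuous_on S mat_opnorm"
proof -
  have "\<bar>mat_opnorm A - mat_opnorm B\<bar> \<le> norm (A - B)" for A B
    using mat_opnorm_diff_le[of A B] mat_opnorm_diff_le[of B A] by (simp add: norm_minus_commute)
  hence "1-lipschitz_on S mat_opnorm"
    by (intro lipschitz_onI) (simp_all add: dist_norm)
  thus ?thesis by (rule lipschitz_on_continuous_on)
qed

lemma norm_le_sqrt2_mat_opnorm: "norm (A::complex^2^2) \<le> sqrt 2 * mat_opnorm A"
proof -
  have unit: "norm (vector [1, 0] :: complex^2) = 1" "norm (vector [0, 1] :: complex^2) = 1"
    by (simp_all add: norm_vec2_eq)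
  have "(norm (A *v vector [1, 0]))^2 \<le> (mat_opnorm A)^2"
    using norm_mult_vector_le_mat_opnorm[of A "vector [1, 0]"] unit by (intro power_mono) auto
  moreover have "(norm (A *v vector [0, 1]))^2 \<le> (mat_opnorm A)^2"
    using norm_mult_vector_le_mat_opnorm[of A "vector [0, 1]"] unit by (intro power_mono) auto
  moreover have "(norm A)^2 = (norm (A *v vector [1, 0]))^2 + (norm (A *v vector [0, 1]))^2"
    by (simp add: norm_mat2_eq norm_vec2_eq matrix_vector_mult_2)
  ultimately have "(norm A)^2 \<le> (sqrt 2 * mat_opnorm A)^2"
    by (simp add: power_mult_distrib)
  thus ?thesis by (rule power2_le_imp_le) (simp add: mat_opnorm_nonneg)
qed

lemma norm_det_le: "2 * cmod (det (A::complex^2^2)) \<le> (norm A)^2"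
proof -
  have "cmod (det A) \<le> cmod (A$1$1) * cmod (A$2$2) + cmod (A$1$2) * cmod (A$2$1)"
    using norm_triangle_ineq4[of "A$1$1 * A$2$2" "A$1$2 * A$2$1"] by (simp add: det_2 norm_mult)
  moreover have "2 * (cmod (A$1$1) * cmod (A$2$2)) \<le> (cmod (A$1$1))^2 + (cmod (A$2$2))^2"
    using zero_le_power2[of "cmod (A$1$1) - cmod (A$2$2)"] by (simp add: power2_eq_square algebra_simps)
  moreover have "2 * (cmod (A$1$2) * cmod (A$2$1)) \<le> (cmod (A$1$2))^2 + (cmod (A$2$1))^2"
    using zero_le_power2[of "cmod (A$1$2) - cmod (A$2$1)"] by (simp add: power2_eq_square algebra_simps)
  ultimately show ?thesis by (simp add: norm_mat2_eq)
qed

lemma mat_opnorm_ge_1_if_det_1: "det A = 1 \<Longrightarrow> 1 \<le> mat_opnorm A"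
proof -
  assume "det A = 1"
  hence "2 \<le> (norm A)^2" using norm_det_le[of A] by simp
  also have "\<dots> \<le> (sqrt 2 * mat_opnorm A)^2"
    using norm_le_sqrt2_mat_opnorm[of A] by (simp add: power_mono)
  finally have "1^2 \<le> (mat_opnorm A)^2" by (simp add: power_mult_distrib)
  thus ?thesis by (rule power2_le_imp_le) (simp add: mat_opnorm_nonneg)
qed

text \<open>Two columns are recovered from the images of \<open>(\<sigma>\<i>, 1)\<close> and \<open>(2\<sigma>\<i>, 1)\<close>.\<close>

lemma norm_le_norms_at_two_vectors:
  fixes M :: "complex^2^2" and \<sigma> :: real
  assumes \<sigma>: "\<bar>\<sigma>\<bar> = 1"
  shows "norm M \<le> 6 * (norm (M *v vector [of_real \<sigma> * \<i>, 1]) + norm (M *v vector [of_real (2*\<sigma>) * \<i>, 1]))"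
proof -
  define P where "P = M *v vector [of_real \<sigma> * \<i>, 1]"
  define Q where "Q = M *v vector [of_real (2*\<sigma>) * \<i>, 1]"
  have \<sigma>_unit: "cmod (of_real \<sigma> * \<i>) = 1" using \<sigma> by (simp add: norm_mult)
  have col1: "M$i$1 = (Q$i - P$i) / (of_real \<sigma> * \<i>)" for i
  proof -
    have "Q$i - P$i = M$i$1 * (of_real \<sigma> * \<i>)"
      using exhaust_2[of i] unfolding P_def Q_def by (auto simp: matrix_vector_mult_2 algebra_simps)
    thus ?thesis using \<sigma> by (auto simp: field_simps)
  qed
  have col2: "M$i$2 = 2 * P$i - Q$i" for i
    using exhaust_2[of i] unfolding P_def Q_def by (auto simp: matrix_vector_mult_2 algebra_simps)
  have b1: "cmod (M$i$1) \<le> norm Q + norm P" for i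
  proof -
    have "cmod (M$i$1) = cmod (Q$i - P$i)" unfolding col1[of i] using \<sigma>_unit by (simp add: norm_divide)
    also have "\<dots> \<le> cmod (Q$i) + cmod (P$i)" by (rule norm_triangle_ineq4)
    also have "\<dots> \<le> norm Q + norm P" using Finite_Cartesian_Product.norm_nth_le[of Q i] Finite_Cartesian_Product.norm_nth_le[of P i] by simp
    finally show ?thesis .
  qed
  have b2: "cmod (M$i$2) \<le> 2 * norm P + norm Q" for i
  proof -
    have "cmod (M$i$2) \<le> cmod (2 * P$i) + cmod (Q$i)" unfolding col2[of i] by (rule norm_triangle_ineq4)
    also have "\<dots> \<le> 2 * norm P + norm Q" using Finite_Cartesian_Product.norm_nth_le[of Q i] Finite_Cartesian_Product.norm_nth_le[of P i] by (simp add: norm_mult)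
    finally show ?thesis .
  qed
  have "norm M \<le> cmod (M$1$1) + cmod (M$1$2) + cmod (M$2$1) + cmod (M$2$2)"
  proof -
    have "(norm M)^2 \<le> (cmod (M$1$1) + cmod (M$1$2) + cmod (M$2$1) + cmod (M$2$2))^2"
      unfolding norm_mat2_eq by (simp add: power2_eq_square algebra_simps)
    thus ?thesis by (rule power2_le_imp_le) simp
  qed
  also have "\<dots> \<le> 6 * (norm P + norm Q)"
    using b1[of 1] b1[of 2] b2[of 1] b2[of 2] norm_ge_zero[of Q] unfolding distrib_left by linarith
  finally show ?thesis unfolding P_def Q_def .
qed

section \<open>Transfer matrices\<close>

lemma Smat_nth:
  "Smat v E z $1$1 = E - v z" "Smat v E z $1$2 = -1" "Smat v E z $2$1 = 1" "Smat v E z $2$2 = 0"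
  by (simp_all add: Smat_def)

lemma Smat_mult_vector: "Smat v E t *v x = vector [(E - v t) * x$1 - x$2, x$1]"
  by (simp add: vec_eq_iff forall_2 matrix_vector_mult_2 Smat_nth)

lemma det_Smat: "det (Smat v E z) = 1"
  by (simp add: det_2 Smat_nth)

lemma det_Mn: "det (Mn v \<alpha> n E z) = 1"
  by (induction n) (simp_all add: det_mul det_Smat)

lemma mat_opnorm_Mn_ge_1: "1 \<le> mat_opnorm (Mn v \<alpha> n E z)"
  by (rule mat_opnorm_ge_1_if_det_1[OF det_Mn])

lemma norm_Mn_ge_1: "1 \<le> norm (Mn v \<alpha> n E z)"
  using mat_opnorm_Mn_ge_1 mat_opnorm_le_norm order_trans by blast

lemma Mn_mult_vector_eq_0_iff: "Mn v \<alpha> n E z *v x = 0 \<longleftrightarrow> x = 0"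
proof -
  have "inj ((*v) (Mn v \<alpha> n E z))"
    by (rule inj_matrix_vector_mult) (simp add: invertible_det_nz det_Mn)
  thus ?thesis by (metis injD matrix_vector_mult_0_right)
qed

lemma Mn_add: "Mn v \<alpha> (m + n) E z = Mn v \<alpha> m E (z + of_real (real n * \<alpha>)) ** Mn v \<alpha> n E z"
proof (induction m)
  case 0 then show ?case by simp
next
  case (Suc m)
  have shift: "z + of_real (real (Suc (m + n)) * \<alpha>) = z + of_real (real n * \<alpha>) + of_real (real (Suc m) * \<alpha>)"
    by (simp add: algebra_simps)
  show ?case
    by (simp only: add_Suc Mn.simps shift Suc matrix_mul_assoc)
qed

section \<open>Periodic functions on horizontal strips\<close>

lemma open_strip: "open (strip h)"
proof -
  have "strip h = {z. - h < Im z \<and> Im z < h}" by (auto simp: strip_def abs_less_iff)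
  also have "open \<dots>" by (intro open_Collect_conj open_Collect_less continuous_intros)
  finally show ?thesis .
qed

lemma add_of_real_in_strip_iff [simp]: "z + of_real r \<in> strip h \<longleftrightarrow> z \<in> strip h"
  by (simp add: strip_def)

lemma Complex_in_strip_iff [simp]: "Complex x y \<in> strip h \<longleftrightarrow> \<bar>y\<bar> < h"
  by (simp add: strip_def)

lemma strip_mono: "h \<le> h' \<Longrightarrow> strip h \<subseteq> strip h'"
  by (auto simp: strip_def)

lemma Complex_eq_of_real_add: "Complex x y = of_real x + \<i> * of_real y"
  by (simp add: complex_eq_iff)

lemma Complex_add_of_real: "Complex x y + of_real c = Complex (x + c) y"
  by (simp add: complex_eq_iff)

lemma continuous_on_Complex_pair: "continuous_on S (\<lambda>p::real \<times> real. Complex (snd p) (fst p))"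
  unfolding Complex_eq_of_real_add by (intro continuous_intros)

lemma continuous_on_horizontal_line:
  "continuous_on (strip h) F \<Longrightarrow> \<bar>y\<bar> < h \<Longrightarrow> continuous_on S (\<lambda>x. F (Complex x y))"
  by (rule continuous_on_compose2[of "strip h" F]) (auto simp: Complex_eq_of_real_add strip_def intro!: continuous_intros)

lemma integrable_on_horizontal_line:
  fixes F :: "complex \<Rightarrow> 'a::banach"
  shows "continuous_on (strip h) F \<Longrightarrow> \<bar>y\<bar> < h \<Longrightarrow> (\<lambda>x. F (Complex x y)) integrable_on {a..b}"
  by (rule integrable_continuous_interval[OF continuous_on_horizontal_line])

lemma continuous_on_strip_rectangle:
  assumes "continuous_on (strip h) F"
  shows "continuous_on ({-h<..<h} \<times> {a..b}) (\<lambda>(y, x). F (Complex x y))"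
proof -
  have "continuous_on ({-h<..<h} \<times> {a..b}) (\<lambda>p. F (Complex (snd p) (fst p)))"
    by (rule continuous_on_compose2[OF assms continuous_on_Complex_pair]) (auto simp: abs_less_iff)
  thus ?thesis by (simp add: case_prod_beta)
qed

lemma DERIV_integral_horizontal:
  fixes F F' :: "complex \<Rightarrow> real"
  assumes F: "continuous_on (strip h) F" and F': "continuous_on (strip h) F'"
    and deriv: "\<And>x y. \<bar>y\<bar> < h \<Longrightarrow> ((\<lambda>t. F (Complex x t)) has_real_derivative F' (Complex x y)) (at y)"
    and y: "\<bar>y\<bar> < h"
  shows "((\<lambda>y. integral {a..b} (\<lambda>x. F (Complex x y))) has_real_derivative
      integral {a..b} (\<lambda>x. F' (Complex x y))) (at y)"
proof -
  have yU: "y \<in> {-h<..<h}" using y by (simp add: abs_less_iff)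
  have "((\<lambda>y. integral (cbox a b) (\<lambda>x. F (Complex x y))) has_field_derivative
      integral (cbox a b) (\<lambda>x. F' (Complex x y))) (at y within {-h<..<h})"
  proof (rule leibniz_rule_field_derivative[where fx="\<lambda>y x. F' (Complex x y)"])
    fix y' x assume "y' \<in> {-h<..<h}"
    thus "((\<lambda>y. F (Complex x y)) has_field_derivative F' (Complex x y')) (at y' within {-h<..<h})"
      by (intro has_field_derivative_at_within[OF deriv]) (simp add: abs_less_iff)
  next
    fix y' assume "y' \<in> {-h<..<h}"
    thus "(\<lambda>x. F (Complex x y')) integrable_on cbox a b"
      using integrable_on_horizontal_line[OF F] by (simp add: abs_less_iff)
  next
    show "continuous_on ({-h<..<h} \<times> cbox a b) (\<lambda>(y, x). F' (Complex x y))"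
      using continuous_on_strip_rectangle[OF F'] by simp
  qed (use yU in auto)
  thus ?thesis using at_within_open[OF yU] by simp
qed

lemma periodic_add_int_mult:
  fixes f :: "real \<Rightarrow> 'a"
  assumes per: "\<And>x. f (x + p) = f x"
  shows "f (x + of_int k * p) = f x"
proof -
  have nat: "f (x + of_nat n * p) = f x" for x n
  proof (induction n)
    case (Suc n)
    have "f (x + of_nat (Suc n) * p) = f ((x + of_nat n * p) + p)" by (simp add: algebra_simps)
    thus ?case using per Suc by simp
  qed simp
  show ?thesis
  proof (cases "k \<ge> 0")
    case True
    then obtain n where "k = int n" by (metis nonneg_eq_int)
    thus ?thesis using nat by simp
  next
    case False
    define n where "n = nat (- k)"
    have n: "k = - int n" using False by (simp add: n_def)
    have "f x = f ((x + of_int k * p) + of_nat n * p)" by (simp add: n)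
    thus ?thesis using nat by simp
  qed
qed

lemma integral_periodic_shift_within_period:
  fixes f :: "real \<Rightarrow> 'a::banach"
  assumes cont: "continuous_on UNIV f" and per: "\<And>x. f (x + p) = f x"
    and c: "0 \<le> c" "c \<le> p"
  shows "integral {0..p} (\<lambda>x. f (x + c)) = integral {0..p} f"
proof -
  have int: "f integrable_on {a..b}" for a b
    by (rule integrable_continuous_interval, rule continuous_on_subset[OF cont]) simp
  have "integral {0..p} (\<lambda>x. f (x + c)) = integral {c..p + c} f"
    using integral_shift_real_ivl[where a=c and b="p + c" and c=c and f=f] by simp
  also have "\<dots> = integral {c..p} f + integral {p..p + c} f"
    using Henstock_Kurzweil_Integration.integral_combine[of c p "p + c" f] int c by simp
  also have "integral {p..p + c} f = integral {0..c} (\<lambda>x. f (x + p))"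
    using integral_shift_real_ivl[where a=p and b="p + c" and c=p and f=f] by simp
  also have "\<dots> = integral {0..c} f" using per by simp
  also have "integral {c..p} f + integral {0..c} f = integral {0..p} f"
    using Henstock_Kurzweil_Integration.integral_combine[of 0 c p f] int c by (simp add: add.commute)
  finally show ?thesis .
qed

lemma integral_periodic_shift:
  fixes f :: "real \<Rightarrow> 'a::banach"
  assumes cont: "continuous_on UNIV f" and per: "\<And>x. f (x + p) = f x" and p: "0 < p"
  shows "integral {0..p} (\<lambda>x. f (x + c)) = integral {0..p} f"
proof -
  define k where "k = \<lfloor>c / p\<rfloor>"
  define c' where "c' = c - of_int k * p"
  have "of_int k \<le> c / p" "c / p < of_int k + 1"
    unfolding k_def by linarith+
  hence c': "0 \<le> c'" "c' \<le> p" unfolding c'_def using p by (simp_all add: field_simps)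
  have "f (x + c) = f (x + c')" for x
    using periodic_add_int_mult[of f p "x + c'" k, OF per] by (simp add: c'_def)
  hence "integral {0..p} (\<lambda>x. f (x + c)) = integral {0..p} (\<lambda>x. f (x + c'))" by simp
  also have "\<dots> = integral {0..p} f" by (rule integral_periodic_shift_within_period[OF cont per c'])
  finally show ?thesis .
qed

section \<open>Fekete's lemma and other limits\<close>

lemma subadditive_mult_add_le:
  fixes a :: "nat \<Rightarrow> real"
  assumes sub: "\<And>m n. a (m + n) \<le> a m + a n"
  shows "a (q * k + j) \<le> real q * a k + a j"
proof (induction q)
  case (Suc q)
  have "a (Suc q * k + j) \<le> a k + a (q * k + j)" using sub[of k "q * k + j"] by (simp add: algebra_simps)
  thus ?case using Suc by (simp add: algebra_simps)
qed simp

lemma fekete_convergent: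
  fixes a :: "nat \<Rightarrow> real"
  assumes sub: "\<And>m n. a (m + n) \<le> a m + a n" and nonneg: "\<And>n. 0 \<le> a n"
  shows "convergent (\<lambda>n. a n / real n)"
proof -
  define L where "L = Inf ((\<lambda>n. a n / real n) ` {1..})"
  have bdd: "bdd_below ((\<lambda>n. a n / real n) ` {1..})"
    by (rule bdd_belowI[of _ 0]) (auto simp: nonneg)
  have L_le: "L \<le> a n / real n" if "n \<ge> 1" for n
    unfolding L_def using bdd that by (auto intro: cInf_lower)
  have "(\<lambda>n. a n / real n) \<longlonglongrightarrow> L"
  proof (rule LIMSEQ_I)
    fix r :: real assume r: "0 < r"
    have "\<exists>k\<in>{1..}. a k / real k < L + r/2"
    proof (rule ccontr)
      assume "\<not> ?thesis"
      hence "L + r/2 \<le> L" unfolding L_def by (intro cInf_greatest) (auto simp: not_less)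
      thus False using r by simp
    qed
    then obtain k where k: "k \<ge> 1" "a k / real k < L + r/2" by auto
    define M where "M = Max (a ` {..<k})"
    have a_le_M: "a j \<le> M" if "j < k" for j unfolding M_def using that by auto
    obtain N :: nat where N: "N > 2 * M / r" using reals_Archimedean2 by blast
    show "\<exists>no. \<forall>n\<ge>no. norm (a n / real n - L) < r"
    proof (intro exI allI impI)
      fix n assume n: "n \<ge> max 1 N"
      have "a n / real n < L + r"
      proof -
        have n_eq: "n = (n div k) * k + n mod k" by simp
        have "a n \<le> real (n div k) * a k + M"
          using subadditive_mult_add_le[OF sub, of "n div k" k "n mod k"] a_le_M[of "n mod k"] k(1) n_eq by simp
        also have "real (n div k) * a k = (real (n div k) * real k) * (a k / real k)" using k by simp
        also have "\<dots> \<le> real n * (a k / real k)"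
        proof (rule mult_right_mono)
          show "real (n div k) * real k \<le> real n" by (metis div_times_less_eq_dividend of_nat_le_iff of_nat_mult)
        qed (use nonneg[of k] in simp)
        finally have "a n / real n \<le> a k / real k + M / real n" using n by (simp add: field_simps)
        moreover have "M / real n < r/2"
        proof -
          have "2 * M / r < real n" using N n by (meson less_le_trans max.boundedE of_nat_le_iff)
          thus ?thesis using r n by (simp add: field_simps)
        qed
        ultimately show ?thesis using k(2) by linarith
      qed
      thus "norm (a n / real n - L) < r" using L_le[of n] n by simp
    qed
  qed
  thus ?thesis by (auto simp: convergent_def)
qed

lemma LIMSEQ_bounded_divide_real:
  fixes a :: "nat \<Rightarrow> real"
  assumes "\<And>n. \<bar>a n\<bar> \<le> C"
  shows "(\<lambda>n. a n / real n) \<longlonglongrightarrow> 0"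
proof (rule Lim_null_comparison)
  show "\<forall>\<^sub>F n in sequentially. norm (a n / real n) \<le> C / real n"
    using assms by (auto simp: abs_divide divide_right_mono intro!: always_eventually)
  show "(\<lambda>n. C / real n) \<longlonglongrightarrow> 0"
    by (rule tendsto_divide_0[OF tendsto_const filterlim_at_top_imp_at_infinity[OF filterlim_real_sequentially]])
qed

lemma convex_on_LIMSEQ:
  fixes f :: "nat \<Rightarrow> real \<Rightarrow> real"
  assumes conv: "\<And>n. convex_on S (f n)" and lim: "\<And>x. x \<in> S \<Longrightarrow> (\<lambda>n. f n x) \<longlonglongrightarrow> g x"
    and "convex S"
  shows "convex_on S g"
proof (rule convex_onI[OF _ \<open>convex S\<close>])
  fix t x y :: real assume t: "0 < t" "t < 1" and xy: "x \<in> S" "y \<in> S"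
  have "(1 - t) *\<^sub>R x + t *\<^sub>R y \<in> S"
    using \<open>convex S\<close> xy t by (simp add: convex_alt)
  hence "(\<lambda>n. f n ((1 - t) *\<^sub>R x + t *\<^sub>R y)) \<longlonglongrightarrow> g ((1 - t) *\<^sub>R x + t *\<^sub>R y)" by (rule lim)
  moreover have "(\<lambda>n. (1 - t) * f n x + t * f n y) \<longlonglongrightarrow> (1 - t) * g x + t * g y"
    using xy by (intro tendsto_intros lim)
  moreover have "f n ((1 - t) *\<^sub>R x + t *\<^sub>R y) \<le> (1 - t) * f n x + t * f n y" for n
    using convex_onD[OF conv, of t x y] t xy by simp
  ultimately show "g ((1 - t) *\<^sub>R x + t *\<^sub>R y) \<le> (1 - t) * g x + t * g y"
    by (intro LIMSEQ_le) auto
qed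

lemma abs_integral_diff_le:
  fixes f g :: "real \<Rightarrow> real"
  assumes f: "f integrable_on {a..b}" and g: "g integrable_on {a..b}"
    and bound: "\<And>x. x \<in> {a..b} \<Longrightarrow> \<bar>f x - g x\<bar> \<le> C" and "a \<le> b"
  shows "\<bar>integral {a..b} f - integral {a..b} g\<bar> \<le> C * (b - a)"
proof -
  have diff: "integral {a..b} f - integral {a..b} g = integral {a..b} (\<lambda>x. f x - g x)"
    by (rule integral_diff[OF f g, symmetric])
  have pointwise: "- C \<le> f x - g x" "f x - g x \<le> C" if "x \<in> {a..b}" for x
    using bound[OF that] by (simp_all add: abs_le_iff)
  have "integral {a..b} (\<lambda>x. f x - g x) \<le> integral {a..b} (\<lambda>x. C)"
    using pointwise by (intro integral_le integrable_diff f g) auto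
  moreover have "integral {a..b} (\<lambda>x. - C) \<le> integral {a..b} (\<lambda>x. f x - g x)"
    using pointwise by (intro integral_le integrable_diff f g) auto
  ultimately show ?thesis using \<open>a \<le> b\<close> unfolding diff by (simp add: abs_le_iff algebra_simps)
qed

section \<open>Holomorphic functions along horizontal and vertical lines\<close>

lemma has_vector_derivative_vertical:
  assumes "f holomorphic_on S" "open S" "Complex x y \<in> S"
  shows "((\<lambda>t. f (Complex x t)) has_vector_derivative \<i> * deriv f (Complex x y)) (at y)"
proof -
  have "((\<lambda>t. Complex x t) has_vector_derivative \<i>) (at y)"
    unfolding Complex_eq_of_real_add by (auto intro!: derivative_eq_intros)
  moreover have "(f has_field_derivative deriv f (Complex x y)) (at (Complex x y))"
    using holomorphic_derivI[OF assms, of UNIV] by simp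
  ultimately show ?thesis using field_vector_diff_chain_at by (force simp: o_def)
qed

lemma has_vector_derivative_horizontal:
  assumes "f holomorphic_on S" "open S" "Complex x y \<in> S"
  shows "((\<lambda>t. f (Complex t y)) has_vector_derivative deriv f (Complex x y)) (at x)"
proof -
  have "((\<lambda>t. Complex t y) has_vector_derivative 1) (at x)"
    unfolding Complex_eq_of_real_add by (auto intro!: derivative_eq_intros)
  moreover have "(f has_field_derivative deriv f (Complex x y)) (at (Complex x y))"
    using holomorphic_derivI[OF assms, of UNIV] by simp
  ultimately show ?thesis using field_vector_diff_chain_at by (force simp: o_def)
qed

lemma has_real_derivative_Re_Im_vertical:
  assumes "f holomorphic_on S" "open S" "Complex x y \<in> S"
  shows "((\<lambda>t. Re (f (Complex x t))) has_real_derivative - Im (deriv f (Complex x y))) (at y)"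
    and "((\<lambda>t. Im (f (Complex x t))) has_real_derivative Re (deriv f (Complex x y))) (at y)"
  unfolding has_real_derivative_iff_has_vector_derivative
  using bounded_linear.has_vector_derivative[OF bounded_linear_Re has_vector_derivative_vertical[OF assms]]
    bounded_linear.has_vector_derivative[OF bounded_linear_Im has_vector_derivative_vertical[OF assms]]
  by simp_all

lemma has_real_derivative_Re_Im_horizontal:
  assumes "f holomorphic_on S" "open S" "Complex x y \<in> S"
  shows "((\<lambda>t. Re (f (Complex t y))) has_real_derivative Re (deriv f (Complex x y))) (at x)"
    and "((\<lambda>t. Im (f (Complex t y))) has_real_derivative Im (deriv f (Complex x y))) (at x)"
  unfolding has_real_derivative_iff_has_vector_derivative
  using bounded_linear.has_vector_derivative[OF bounded_linear_Re has_vector_derivative_horizontal[OF assms]]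
    bounded_linear.has_vector_derivative[OF bounded_linear_Im has_vector_derivative_horizontal[OF assms]]
  by simp_all

lemma deriv_periodic:
  assumes f: "f holomorphic_on strip h" and per: "\<And>z. z \<in> strip h \<Longrightarrow> f (z + of_real p) = f z"
    and z: "z \<in> strip h"
  shows "deriv f (z + of_real p) = deriv f z"
proof -
  have outer: "(f has_field_derivative deriv f (z + of_real p)) (at (z + of_real p))"
    using holomorphic_derivI[OF f open_strip, of "z + of_real p" UNIV] z by simp
  have inner: "((\<lambda>w. w + of_real p) has_field_derivative 1) (at z)"
    by (auto intro!: derivative_eq_intros)
  have "((\<lambda>w. f (w + of_real p)) has_field_derivative deriv f (z + of_real p)) (at z)"
    using DERIV_chain[OF outer inner] by (simp add: o_def)
  hence "(f has_field_derivative deriv f (z + of_real p)) (at z)"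
    by (rule has_field_derivative_transform_within_open[OF _ open_strip z]) (rule per)
  thus ?thesis by (rule DERIV_imp_deriv[symmetric])
qed

lemma mean_Im_deriv_periodic_eq_0:
  assumes f: "f holomorphic_on strip d"
    and per: "\<And>z. z \<in> strip d \<Longrightarrow> f (z + of_real (2*pi)) = f z"
    and y: "\<bar>y\<bar> < d"
  shows "integral {0..2*pi} (\<lambda>x. - Im (deriv f (Complex x y))) = 0"
proof -
  have "((\<lambda>x. Im (deriv f (Complex x y))) has_integral Im (f (Complex (2*pi) y)) - Im (f (Complex 0 y))) {0..2*pi}"
    using has_real_derivative_Re_Im_horizontal(2)[OF f open_strip] y
    by (intro fundamental_theorem_of_calculus)
       (auto simp: has_real_derivative_iff_has_vector_derivative intro: has_vector_derivative_at_within)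
  moreover have "Complex (2*pi) y = Complex 0 y + of_real (2*pi)" by (simp add: complex_eq_iff)
  hence "f (Complex (2*pi) y) = f (Complex 0 y)" using per[of "Complex 0 y"] y by simp
  ultimately show ?thesis by (simp add: integral_unique integral_neg)
qed

text \<open>By Cauchy--Riemann, \<open>\<partial>\<^sub>y Re f = - Im f' = - \<partial>\<^sub>x Im f\<close>, whose mean over a period vanishes.\<close>

lemma periodic_holomorphic_mean_Re_eq:
  assumes f: "f holomorphic_on strip d"
    and per: "\<And>z. z \<in> strip d \<Longrightarrow> f (z + of_real (2*pi)) = f z"
    and y1: "\<bar>y1\<bar> < d" and y2: "\<bar>y2\<bar> < d"
  shows "integral {0..2*pi} (\<lambda>x. Re (f (Complex x y1))) = integral {0..2*pi} (\<lambda>x. Re (f (Complex x y2)))"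
proof -
  define G where "G y = integral {0..2*pi} (\<lambda>x. Re (f (Complex x y)))" for y
  have cont_f: "continuous_on (strip d) f" by (rule holomorphic_on_imp_continuous_on[OF f])
  have cont_f': "continuous_on (strip d) (deriv f)"
    by (rule holomorphic_on_imp_continuous_on[OF holomorphic_deriv[OF f open_strip]])
  have "(G has_real_derivative 0) (at y)" if y: "\<bar>y\<bar> < d" for y
  proof -
    have "(G has_real_derivative integral {0..2*pi} (\<lambda>x. - Im (deriv f (Complex x y)))) (at y)"
      unfolding G_def
    proof (rule DERIV_integral_horizontal[where F="\<lambda>z. Re (f z)" and F'="\<lambda>z. - Im (deriv f z)", OF _ _ _ y])
      show "continuous_on (strip d) (\<lambda>z. Re (f z))" using cont_f by (intro continuous_intros)
      show "continuous_on (strip d) (\<lambda>z. - Im (deriv f z))" using cont_f' by (intro continuous_intros)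
      show "((\<lambda>t. Re (f (Complex x t))) has_real_derivative - Im (deriv f (Complex x y'))) (at y')"
        if "\<bar>y'\<bar> < d" for x y'
        using has_real_derivative_Re_Im_vertical(1)[OF f open_strip] that by simp
    qed
    thus ?thesis using mean_Im_deriv_periodic_eq_0[OF f per y] by simp
  qed
  moreover have "y1 \<in> {-d<..<d}" "y2 \<in> {-d<..<d}" "-d < d" using y1 y2 by (auto simp: abs_less_iff)
  ultimately have "G y1 = G y2" by (intro DERIV_isconst3[of "-d" d]) (auto simp: abs_less_iff)
  thus ?thesis unfolding G_def .
qed

section \<open>Convexity of the mean of \<open>log \<Sum>|g\<^sub>k|\<^sup>2\<close>\<close>

lemma DERIV_sum_squares:
  "(a has_real_derivative a') (at y) \<Longrightarrow> (b has_real_derivative b') (at y) \<Longrightarrow>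
   ((\<lambda>t. (a t)^2 + (b t)^2) has_real_derivative (2 * a y * a' + 2 * b y * b')) (at y)"
  by (auto intro!: derivative_eq_intros)

lemma DERIV_sum_products:
  "(a has_real_derivative a') (at y) \<Longrightarrow> (b has_real_derivative b') (at y) \<Longrightarrow>
   (c has_real_derivative c') (at y) \<Longrightarrow> (d has_real_derivative d') (at y) \<Longrightarrow>
   ((\<lambda>t. a t * b t + c t * d t) has_real_derivative (a' * b y + a y * b' + (c' * d y + c y * d'))) (at y)"
  by (auto intro!: derivative_eq_intros)

lemma DERIV_diff_products:
  "(a has_real_derivative a') (at y) \<Longrightarrow> (b has_real_derivative b') (at y) \<Longrightarrow>
   (c has_real_derivative c') (at y) \<Longrightarrow> (d has_real_derivative d') (at y) \<Longrightarrow>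
   ((\<lambda>t. a t * b t - c t * d t) has_real_derivative (a' * b y + a y * b' - (c' * d y + c y * d'))) (at y)"
  by (auto intro!: derivative_eq_intros)

text \<open>With \<open>N = \<Sum>|g\<^sub>k|\<^sup>2\<close>, \<open>P = \<Sum> conj g\<^sub>k g\<^sub>k'\<close> and \<open>R = \<Sum>|g\<^sub>k'|\<^sup>2\<close>, the Laplacian of \<open>log N\<close>
  is \<open>4 (N R - |P|\<^sup>2) / N\<^sup>2 \<ge> 0\<close> (Cauchy--Schwarz). Its \<open>\<partial>\<^sub>x\<^sub>x\<close> part integrates to zero over a period,
  so the second derivative in \<open>y\<close> of the mean of \<open>log N\<close> is nonnegative.\<close>

locale periodic_holomorphic_family =
  fixes g :: "'k \<Rightarrow> complex \<Rightarrow> complex" and K :: "'k set" and h :: real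
  assumes finite_K: "finite K"
    and holo: "\<And>k. k \<in> K \<Longrightarrow> g k holomorphic_on strip h"
    and periodic: "\<And>k z. k \<in> K \<Longrightarrow> z \<in> strip h \<Longrightarrow> g k (z + of_real (2*pi)) = g k z"
    and sum_sq_pos: "\<And>z. z \<in> strip h \<Longrightarrow> 0 < (\<Sum>k\<in>K. (Re (g k z))^2 + (Im (g k z))^2)"
begin

definition "g' k = deriv (g k)"
definition "g'' k = deriv (g' k)"

lemma holo_g': "k \<in> K \<Longrightarrow> g' k holomorphic_on strip h"
  unfolding g'_def by (rule holomorphic_deriv[OF holo open_strip])

lemma holo_g'': "k \<in> K \<Longrightarrow> g'' k holomorphic_on strip h"
  unfolding g''_def by (rule holomorphic_deriv[OF holo_g' open_strip])

lemma periodic_g': "k \<in> K \<Longrightarrow> z \<in> strip h \<Longrightarrow> g' k (z + of_real (2*pi)) = g' k z"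
  unfolding g'_def by (rule deriv_periodic[OF holo periodic])

definition "N z = (\<Sum>k\<in>K. (Re (g k z))^2 + (Im (g k z))^2)"
definition "ReP z = (\<Sum>k\<in>K. Re (g k z) * Re (g' k z) + Im (g k z) * Im (g' k z))"
definition "ImP z = (\<Sum>k\<in>K. Re (g k z) * Im (g' k z) - Im (g k z) * Re (g' k z))"
definition "R z = (\<Sum>k\<in>K. (Re (g' k z))^2 + (Im (g' k z))^2)"
definition "ReQ z = (\<Sum>k\<in>K. Re (g k z) * Re (g'' k z) + Im (g k z) * Im (g'' k z))"
definition "logN_dy z = -2 * ImP z / N z"
definition "logN_dx z = 2 * ReP z / N z"
definition "logN_dyy z = (2 * R z - 2 * ReQ z) / N z - 4 * (ImP z)^2 / (N z)^2"
definition "logN_dxx z = (2 * R z + 2 * ReQ z) / N z - 4 * (ReP z)^2 / (N z)^2"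

lemma N_pos: "\<bar>y\<bar> < h \<Longrightarrow> 0 < N (Complex x y)"
  unfolding N_def by (rule sum_sq_pos) simp

lemma DERIV_vertical:
  assumes k: "k \<in> K" and y: "\<bar>y\<bar> < h"
  shows "((\<lambda>t. Re (g k (Complex x t))) has_real_derivative - Im (g' k (Complex x y))) (at y)"
    and "((\<lambda>t. Im (g k (Complex x t))) has_real_derivative Re (g' k (Complex x y))) (at y)"
    and "((\<lambda>t. Re (g' k (Complex x t))) has_real_derivative - Im (g'' k (Complex x y))) (at y)"
    and "((\<lambda>t. Im (g' k (Complex x t))) has_real_derivative Re (g'' k (Complex x y))) (at y)"
  using has_real_derivative_Re_Im_vertical[OF holo[OF k] open_strip, of x y]
    has_real_derivative_Re_Im_vertical[OF holo_g'[OF k] open_strip, of x y] y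
  by (simp_all add: g'_def[symmetric] g''_def[symmetric])

lemma DERIV_horizontal:
  assumes k: "k \<in> K" and y: "\<bar>y\<bar> < h"
  shows "((\<lambda>t. Re (g k (Complex t y))) has_real_derivative Re (g' k (Complex x y))) (at x)"
    and "((\<lambda>t. Im (g k (Complex t y))) has_real_derivative Im (g' k (Complex x y))) (at x)"
    and "((\<lambda>t. Re (g' k (Complex t y))) has_real_derivative Re (g'' k (Complex x y))) (at x)"
    and "((\<lambda>t. Im (g' k (Complex t y))) has_real_derivative Im (g'' k (Complex x y))) (at x)"
  using has_real_derivative_Re_Im_horizontal[OF holo[OF k] open_strip, of x y]
    has_real_derivative_Re_Im_horizontal[OF holo_g'[OF k] open_strip, of x y] y
  by (simp_all add: g'_def[symmetric] g''_def[symmetric])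

lemma DERIV_N_y:
  assumes y: "\<bar>y\<bar> < h"
  shows "((\<lambda>t. N (Complex x t)) has_real_derivative (-2 * ImP (Complex x y))) (at y)"
proof -
  have "((\<lambda>t. (Re (g k (Complex x t)))^2 + (Im (g k (Complex x t)))^2) has_real_derivative
      -2 * (Re (g k (Complex x y)) * Im (g' k (Complex x y)) - Im (g k (Complex x y)) * Re (g' k (Complex x y)))) (at y)"
    if k: "k \<in> K" for k
    using DERIV_sum_squares[OF DERIV_vertical(1,2)[OF k y]] by (simp add: algebra_simps)
  from DERIV_sum[OF this]
  show ?thesis unfolding N_def ImP_def by (simp add: sum_distrib_left)
qed

lemma DERIV_ImP_y:
  assumes y: "\<bar>y\<bar> < h"
  shows "((\<lambda>t. ImP (Complex x t)) has_real_derivative (ReQ (Complex x y) - R (Complex x y))) (at y)"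
proof -
  have "((\<lambda>t. Re (g k (Complex x t)) * Im (g' k (Complex x t)) - Im (g k (Complex x t)) * Re (g' k (Complex x t)))
      has_real_derivative (Re (g k (Complex x y)) * Re (g'' k (Complex x y)) + Im (g k (Complex x y)) * Im (g'' k (Complex x y)))
        - ((Re (g' k (Complex x y)))^2 + (Im (g' k (Complex x y)))^2)) (at y)"
    if k: "k \<in> K" for k
    using DERIV_diff_products[OF DERIV_vertical(1,4,2,3)[OF k y]]
    by (simp add: algebra_simps power2_eq_square)
  from DERIV_sum[OF this]
  show ?thesis unfolding ImP_def ReQ_def R_def by (simp add: sum_subtractf)
qed

lemma DERIV_N_x:
  assumes y: "\<bar>y\<bar> < h"
  shows "((\<lambda>t. N (Complex t y)) has_real_derivative (2 * ReP (Complex x y))) (at x)"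
proof -
  have "((\<lambda>t. (Re (g k (Complex t y)))^2 + (Im (g k (Complex t y)))^2) has_real_derivative
      2 * (Re (g k (Complex x y)) * Re (g' k (Complex x y)) + Im (g k (Complex x y)) * Im (g' k (Complex x y)))) (at x)"
    if k: "k \<in> K" for k
    using DERIV_sum_squares[OF DERIV_horizontal(1,2)[OF k y]] by (simp add: algebra_simps)
  from DERIV_sum[OF this]
  show ?thesis unfolding N_def ReP_def by (simp add: sum_distrib_left)
qed

lemma DERIV_ReP_x:
  assumes y: "\<bar>y\<bar> < h"
  shows "((\<lambda>t. ReP (Complex t y)) has_real_derivative (R (Complex x y) + ReQ (Complex x y))) (at x)"
proof -
  have "((\<lambda>t. Re (g k (Complex t y)) * Re (g' k (Complex t y)) + Im (g k (Complex t y)) * Im (g' k (Complex t y)))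
      has_real_derivative ((Re (g' k (Complex x y)))^2 + (Im (g' k (Complex x y)))^2) +
        (Re (g k (Complex x y)) * Re (g'' k (Complex x y)) + Im (g k (Complex x y)) * Im (g'' k (Complex x y)))) (at x)"
    if k: "k \<in> K" for k
    using DERIV_sum_products[OF DERIV_horizontal(1,3,2,4)[OF k y]]
    by (simp add: algebra_simps power2_eq_square)
  from DERIV_sum[OF this]
  show ?thesis unfolding ReP_def ReQ_def R_def by (simp add: sum.distrib)
qed

lemma continuous_on_g: "k \<in> K \<Longrightarrow> continuous_on (strip h) (g k)"
  by (rule holomorphic_on_imp_continuous_on[OF holo])
lemma continuous_on_g': "k \<in> K \<Longrightarrow> continuous_on (strip h) (g' k)"
  by (rule holomorphic_on_imp_continuous_on[OF holo_g'])
lemma continuous_on_g'': "k \<in> K \<Longrightarrow> continuous_on (strip h) (g'' k)"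
  by (rule holomorphic_on_imp_continuous_on[OF holo_g''])

lemma continuous_on_N: "continuous_on (strip h) N"
  unfolding N_def by (intro continuous_intros continuous_on_g)
lemma continuous_on_ReP: "continuous_on (strip h) ReP"
  unfolding ReP_def by (intro continuous_intros continuous_on_g continuous_on_g')
lemma continuous_on_ImP: "continuous_on (strip h) ImP"
  unfolding ImP_def by (intro continuous_intros continuous_on_g continuous_on_g')
lemma continuous_on_R: "continuous_on (strip h) R"
  unfolding R_def by (intro continuous_intros continuous_on_g')
lemma continuous_on_ReQ: "continuous_on (strip h) ReQ"
  unfolding ReQ_def by (intro continuous_intros continuous_on_g continuous_on_g'')

lemma N_nz: "z \<in> strip h \<Longrightarrow> N z \<noteq> 0"
  using sum_sq_pos[of z] unfolding N_def by simp

lemma continuous_on_logN: "continuous_on (strip h) (\<lambda>z. ln (N z))"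
  by (intro continuous_on_ln continuous_on_N) (auto simp: N_nz)
lemma continuous_on_logN_dy: "continuous_on (strip h) logN_dy"
  unfolding logN_dy_def by (intro continuous_intros continuous_on_N continuous_on_ImP) (auto simp: N_nz)
lemma continuous_on_logN_dyy: "continuous_on (strip h) logN_dyy"
  unfolding logN_dyy_def by (intro continuous_intros continuous_on_N continuous_on_ImP continuous_on_R continuous_on_ReQ) (auto simp: N_nz)
lemma continuous_on_logN_dxx: "continuous_on (strip h) logN_dxx"
  unfolding logN_dxx_def by (intro continuous_intros continuous_on_N continuous_on_ReP continuous_on_R continuous_on_ReQ) (auto simp: N_nz)

lemma DERIV_logN_y: assumes y: "\<bar>y\<bar> < h"
  shows "((\<lambda>t. ln (N (Complex x t))) has_real_derivative logN_dy (Complex x y)) (at y)"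
proof (rule DERIV_cong)
  show "((\<lambda>t. ln (N (Complex x t))) has_real_derivative (inverse (N (Complex x y)) * (-2 * ImP (Complex x y)))) (at y)"
    by (rule DERIV_chain2[OF DERIV_ln[OF N_pos[OF y]] DERIV_N_y[OF y]])
  show "inverse (N (Complex x y)) * (-2 * ImP (Complex x y)) = logN_dy (Complex x y)"
    by (simp add: logN_dy_def divide_inverse mult.commute)
qed

lemma DERIV_logN_dy_y: assumes y: "\<bar>y\<bar> < h"
  shows "((\<lambda>t. logN_dy (Complex x t)) has_real_derivative logN_dyy (Complex x y)) (at y)"
proof -
  have nz: "N (Complex x y) \<noteq> 0" using N_pos[OF y, of x] by simp
  have "((\<lambda>t. (-2 * ImP (Complex x t)) / N (Complex x t)) has_real_derivative
     ((-2 * (ReQ (Complex x y) - R (Complex x y))) * N (Complex x y) - (-2 * ImP (Complex x y)) * (-2 * ImP (Complex x y)))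
       / (N (Complex x y) * N (Complex x y))) (at y)"
    by (rule DERIV_divide[OF DERIV_cmult[OF DERIV_ImP_y[OF y]] DERIV_N_y[OF y] nz])
  moreover have "((-2 * (ReQ (Complex x y) - R (Complex x y))) * N (Complex x y) - (-2 * ImP (Complex x y)) * (-2 * ImP (Complex x y)))
       / (N (Complex x y) * N (Complex x y)) = logN_dyy (Complex x y)"
    using nz unfolding logN_dyy_def by (simp add: field_simps power2_eq_square)
  ultimately show ?thesis unfolding logN_dy_def by simp
qed

lemma DERIV_logN_dx_x: assumes y: "\<bar>y\<bar> < h"
  shows "((\<lambda>t. logN_dx (Complex t y)) has_real_derivative logN_dxx (Complex x y)) (at x)"
proof -
  have nz: "N (Complex x y) \<noteq> 0" using N_pos[OF y, of x] by simp
  have "((\<lambda>t. (2 * ReP (Complex t y)) / N (Complex t y)) has_real_derivative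
     ((2 * (R (Complex x y) + ReQ (Complex x y))) * N (Complex x y) - (2 * ReP (Complex x y)) * (2 * ReP (Complex x y)))
       / (N (Complex x y) * N (Complex x y))) (at x)"
    by (rule DERIV_divide[OF DERIV_cmult[OF DERIV_ReP_x[OF y]] DERIV_N_x[OF y] nz])
  moreover have "((2 * (R (Complex x y) + ReQ (Complex x y))) * N (Complex x y) - (2 * ReP (Complex x y)) * (2 * ReP (Complex x y)))
       / (N (Complex x y) * N (Complex x y)) = logN_dxx (Complex x y)"
    using nz unfolding logN_dxx_def by (simp add: field_simps power2_eq_square)
  ultimately show ?thesis unfolding logN_dx_def by simp
qed

lemma P_sq_le_N_R: "(ReP z)^2 + (ImP z)^2 \<le> N z * R z"
proof -
  define P where "P = (\<Sum>k\<in>K. cnj (g k z) * g' k z)"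
  have reP: "Re P = ReP z" unfolding P_def ReP_def by (simp add: Re_sum)
  have imP: "Im P = ImP z" unfolding P_def ImP_def by (simp add: Im_sum)
  have "cmod P \<le> (\<Sum>k\<in>K. cmod (g k z) * cmod (g' k z))"
    unfolding P_def by (rule order_trans[OF norm_sum]) (simp add: norm_mult)
  hence "(cmod P)^2 \<le> (\<Sum>k\<in>K. cmod (g k z) * cmod (g' k z))^2"
    by (simp add: power_mono)
  also have "\<dots> \<le> (\<Sum>k\<in>K. (cmod (g k z))^2) * (\<Sum>k\<in>K. (cmod (g' k z))^2)"
    by (rule Cauchy_Schwarz_ineq_sum)
  also have "\<dots> = N z * R z" unfolding N_def R_def by (simp add: cmod_power2)
  finally show ?thesis using reP imP by (simp add: cmod_power2)
qed

lemma logN_dyy_eq: "z \<in> strip h \<Longrightarrow> logN_dyy z = (4 * (N z * R z - ((ReP z)^2 + (ImP z)^2)) / (N z)^2) - logN_dxx z"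
  using N_nz[of z] unfolding logN_dyy_def logN_dxx_def by (simp add: field_simps power2_eq_square)

lemma laplacian_logN_nonneg: "0 \<le> 4 * (N z * R z - ((ReP z)^2 + (ImP z)^2)) / (N z)^2"
  using P_sq_le_N_R[of z] by simp

definition "mean_logN y = integral {0..2*pi} (\<lambda>x. ln (N (Complex x y)))"
definition "mean_logN_dy y = integral {0..2*pi} (\<lambda>x. logN_dy (Complex x y))"
definition "mean_logN_dyy y = integral {0..2*pi} (\<lambda>x. logN_dyy (Complex x y))"

lemma DERIV_mean_logN: "\<bar>y\<bar> < h \<Longrightarrow> (mean_logN has_real_derivative mean_logN_dy y) (at y)"
  unfolding mean_logN_def[abs_def] mean_logN_dy_def
  by (rule DERIV_integral_horizontal[OF continuous_on_logN continuous_on_logN_dy DERIV_logN_y])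

lemma DERIV_mean_logN_dy: "\<bar>y\<bar> < h \<Longrightarrow> (mean_logN_dy has_real_derivative mean_logN_dyy y) (at y)"
  unfolding mean_logN_dy_def[abs_def] mean_logN_dyy_def
  by (rule DERIV_integral_horizontal[OF continuous_on_logN_dy continuous_on_logN_dyy DERIV_logN_dy_y])

lemma periodic_ReP: "z \<in> strip h \<Longrightarrow> ReP (z + of_real (2*pi)) = ReP z"
  unfolding ReP_def by (intro sum.cong refl) (simp only: periodic periodic_g')
lemma periodic_N: "z \<in> strip h \<Longrightarrow> N (z + of_real (2*pi)) = N z"
  unfolding N_def by (intro sum.cong refl) (simp only: periodic)
lemma periodic_logN_dx: "z \<in> strip h \<Longrightarrow> logN_dx (z + of_real (2*pi)) = logN_dx z"
  unfolding logN_dx_def by (simp only: periodic_ReP periodic_N)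

lemma mean_logN_dxx_eq_0: assumes y: "\<bar>y\<bar> < h" shows "integral {0..2*pi} (\<lambda>x. logN_dxx (Complex x y)) = 0"
proof -
  have "((\<lambda>x. logN_dxx (Complex x y)) has_integral (logN_dx (Complex (2*pi) y) - logN_dx (Complex 0 y))) {0..2*pi}"
  proof (rule fundamental_theorem_of_calculus)
    fix x assume "x \<in> {0..2*pi}"
    show "((\<lambda>t. logN_dx (Complex t y)) has_vector_derivative logN_dxx (Complex x y)) (at x within {0..2*pi})"
      using DERIV_logN_dx_x[OF y, of x] unfolding has_real_derivative_iff_has_vector_derivative
      by (rule has_vector_derivative_at_within)
  qed simp
  moreover have "logN_dx (Complex (2*pi) y) = logN_dx (Complex 0 y)"
  proof -
    have e: "Complex (2*pi) y = Complex 0 y + of_real (2*pi)" by (simp add: complex_eq_iff)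
    have "logN_dx (Complex (2*pi) y) = logN_dx (Complex 0 y + of_real (2*pi))" by (simp only: e)
    also have "\<dots> = logN_dx (Complex 0 y)" by (rule periodic_logN_dx) (simp add: y)
    finally show ?thesis .
  qed
  ultimately show ?thesis by (simp add: integral_unique)
qed

lemma mean_logN_dyy_nonneg: assumes y: "\<bar>y\<bar> < h" shows "0 \<le> mean_logN_dyy y"
proof -
  let ?D = "\<lambda>z. 4 * (N z * R z - ((ReP z)^2 + (ImP z)^2)) / (N z)^2"
  have cD: "continuous_on (strip h) ?D"
    by (intro continuous_intros continuous_on_N continuous_on_ReP continuous_on_ImP continuous_on_R) (auto simp: N_nz)
  have "mean_logN_dyy y = integral {0..2*pi} (\<lambda>x. ?D (Complex x y) - logN_dxx (Complex x y))"
    unfolding mean_logN_dyy_def using y by (intro integral_cong) (simp add: logN_dyy_eq)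
  also have "\<dots> = integral {0..2*pi} (\<lambda>x. ?D (Complex x y)) - integral {0..2*pi} (\<lambda>x. logN_dxx (Complex x y))"
    by (rule integral_diff[OF integrable_on_horizontal_line[OF cD y] integrable_on_horizontal_line[OF continuous_on_logN_dxx y]])
  also have "\<dots> = integral {0..2*pi} (\<lambda>x. ?D (Complex x y))" using mean_logN_dxx_eq_0[OF y] by simp
  also have "\<dots> \<ge> 0" by (rule integral_nonneg[OF integrable_on_horizontal_line[OF cD y]]) (rule laplacian_logN_nonneg)
  finally show ?thesis .
qed

lemma mono_mean_logN_dy: assumes a: "\<bar>a\<bar> < h" and b: "\<bar>b\<bar> < h" and ab: "a \<le> b" shows "mean_logN_dy a \<le> mean_logN_dy b"
proof (rule DERIV_nonneg_imp_increasing_open[OF ab])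
  fix x assume "a < x" "x < b"
  hence x: "\<bar>x\<bar> < h" using a b by (simp add: abs_less_iff)
  show "\<exists>y. (mean_logN_dy has_real_derivative y) (at x) \<and> 0 \<le> y"
    using DERIV_mean_logN_dy[OF x] mean_logN_dyy_nonneg[OF x] by blast
next
  show "continuous_on {a..b} mean_logN_dy"
  proof (rule continuous_at_imp_continuous_on, intro ballI)
    fix x assume "x \<in> {a..b}"
    hence x: "\<bar>x\<bar> < h" using a b by (simp add: abs_less_iff)
    show "isCont mean_logN_dy x" by (rule DERIV_isCont[OF DERIV_mean_logN_dy[OF x]])
  qed
qed

lemma convex_mean_logN: "convex_on {-h<..<h} mean_logN"
proof (rule convex_on_realI[where f'=mean_logN_dy])
  show "connected {-h<..<h}" by simp
  fix x assume "x \<in> {-h<..<h}"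
  thus "(mean_logN has_real_derivative mean_logN_dy x) (at x)" by (intro DERIV_mean_logN) (simp add: abs_less_iff)
next
  fix x y assume "x \<in> {-h<..<h}" "y \<in> {-h<..<h}" "x \<le> y"
  thus "mean_logN_dy x \<le> mean_logN_dy y" by (intro mono_mean_logN_dy) (auto simp: abs_less_iff)
qed

end

section \<open>Hyperbolic contraction of \<open>w \<mapsto> e - 1/w\<close>\<close>

lemma Im_one_div: "Im (1 / u) = - Im u / (cmod u)^2"
  by (simp add: Im_divide cmod_power2)

lemma norm_one_div_le: "0 < c \<Longrightarrow> c \<le> \<bar>Im u\<bar> \<Longrightarrow> cmod (1 / u) \<le> 1 / c"
  using abs_Im_le_cmod[of u] by (simp add: norm_divide frac_le)

text \<open>For \<open>\<sigma> = \<plusminus>1\<close> and \<open>a, b\<close> in the half-plane \<open>\<sigma> Im > 0\<close>, this is \<open>2 (cosh d - 1)\<close>,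
  \<open>d\<close> the hyperbolic distance of \<open>a\<close> and \<open>b\<close>.\<close>

definition hyperbolic_ratio :: "real \<Rightarrow> complex \<Rightarrow> complex \<Rightarrow> real" where
  "hyperbolic_ratio \<sigma> a b = (cmod (a - b))^2 / ((\<sigma> * Im a) * (\<sigma> * Im b))"

lemma hyperbolic_ratio_nonneg: "0 < \<sigma> * Im a \<Longrightarrow> 0 < \<sigma> * Im b \<Longrightarrow> 0 \<le> hyperbolic_ratio \<sigma> a b"
  by (simp add: hyperbolic_ratio_def)

lemma Im_minus_one_div_ge:
  fixes a e :: complex and \<sigma> c :: real
  assumes c: "0 < c" and e: "c \<le> \<sigma> * Im e" and a: "c \<le> \<sigma> * Im a" and sign: "\<sigma> = 1 \<or> \<sigma> = -1"
  shows "(1 + c^2) * (\<sigma> * Im a) / (cmod a)^2 \<le> \<sigma> * Im (e - 1/a)"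
proof -
  have a_pos: "0 < (cmod a)^2" using a c by auto
  have "c * (\<sigma> * Im a) \<le> (\<sigma> * Im a)^2" using a c by (simp add: power2_eq_square mult_right_mono)
  also have "\<dots> = (Im a)^2" using sign by auto
  also have "\<dots> \<le> (cmod a)^2" by (simp add: cmod_power2)
  finally have "c^2 * (\<sigma> * Im a) / (cmod a)^2 \<le> c"
    using a_pos c by (simp add: power2_eq_square divide_le_eq mult.assoc mult_left_mono)
  moreover have "\<sigma> * Im (e - 1/a) = \<sigma> * Im e + \<sigma> * Im a / (cmod a)^2"
    by (simp add: Im_one_div algebra_simps)
  ultimately show ?thesis using e by (simp add: add_divide_distrib distrib_right)
qed

lemma hyperbolic_ratio_contraction:
  fixes a b e :: complex and \<sigma> c :: real
  assumes c: "0 < c" and e: "c \<le> \<sigma> * Im e" and a: "c \<le> \<sigma> * Im a" and b: "c \<le> \<sigma> * Im b"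
    and sign: "\<sigma> = 1 \<or> \<sigma> = -1"
  shows "hyperbolic_ratio \<sigma> (e - 1/a) (e - 1/b) \<le> (1 / (1 + c^2))^2 * hyperbolic_ratio \<sigma> a b"
proof -
  let ?A = "(cmod a)^2" and ?B = "(cmod b)^2"
  have A: "0 < ?A" and B: "0 < ?B" using a b c by auto
  have a_pos: "0 < \<sigma> * Im a" and b_pos: "0 < \<sigma> * Im b" using a b c by linarith+
  have num: "(cmod ((e - 1/a) - (e - 1/b)))^2 = (cmod (a - b))^2 / (?A * ?B)"
  proof -
    have "(e - 1/a) - (e - 1/b) = (a - b) / (a * b)" using A B by (auto simp: field_simps)
    thus ?thesis by (simp add: norm_divide norm_mult power_divide power_mult_distrib)
  qed
  let ?pa = "(1 + c^2) * (\<sigma> * Im a) / ?A" and ?pb = "(1 + c^2) * (\<sigma> * Im b) / ?B"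
  have c2: "0 < 1 + c^2" by (simp add: add_pos_nonneg)
  have pa: "0 < ?pa" and pb: "0 < ?pb" using c2 a_pos b_pos A B by simp_all
  have ga: "?pa \<le> \<sigma> * Im (e - 1/a)" and gb: "?pb \<le> \<sigma> * Im (e - 1/b)"
    using Im_minus_one_div_ge[OF c e a sign] Im_minus_one_div_ge[OF c e b sign] .
  have den: "?pa * ?pb \<le> (\<sigma> * Im (e - 1/a)) * (\<sigma> * Im (e - 1/b))"
    by (rule mult_mono[OF ga gb]) (use pa pb ga in linarith)+
  have "hyperbolic_ratio \<sigma> (e - 1/a) (e - 1/b) \<le> ((cmod (a - b))^2 / (?A * ?B)) / (?pa * ?pb)"
  proof -
    have pp: "0 < ?pa * ?pb" using pa pb by (rule mult_pos_pos)
    hence "0 < (\<sigma> * Im (e - 1/a)) * (\<sigma> * Im (e - 1/b))" using den by linarith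
    hence "0 < (\<sigma> * Im (e - 1/a)) * (\<sigma> * Im (e - 1/b)) * (?pa * ?pb)" using pp by (rule mult_pos_pos)
    thus ?thesis unfolding hyperbolic_ratio_def num by (rule divide_left_mono[OF den, rotated]) simp
  qed
  also have "\<dots> = (1 / (1 + c^2))^2 * hyperbolic_ratio \<sigma> a b"
    using A B a_pos b_pos c2 unfolding hyperbolic_ratio_def by (simp add: field_simps power2_eq_square)
  finally show ?thesis .
qed


lemma abs_ln_diff_le:
  fixes c x y :: real
  assumes c: "0 < c" "c \<le> x" "c \<le> y"
  shows "\<bar>ln x - ln y\<bar> \<le> \<bar>x - y\<bar> / c"
proof -
  have g: "ln x - ln y \<le> \<bar>x - y\<bar> / c" if xy: "c \<le> x" "c \<le> y" for x y :: real
  proof -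
    have xp: "0 < x" "0 < y" using xy c by linarith+
    have "ln x - ln y = ln (x / y)" using xp by (simp add: ln_div)
    also have "\<dots> \<le> x / y - 1" using xp by (intro ln_le_minus_one) simp
    also have "\<dots> = (x - y) / y" using xp by (simp add: field_simps)
    also have "\<dots> \<le> \<bar>x - y\<bar> / y" using xp by (simp add: divide_right_mono)
    also have "\<dots> \<le> \<bar>x - y\<bar> / c" using xp xy c by (intro divide_left_mono) auto
    finally show ?thesis .
  qed
  show ?thesis using g[of x y] g[of y x] c by (simp add: abs_minus_commute)
qed

section \<open>Analytic quasi-periodic potentials\<close>

locale analytic_potential =
  fixes v :: "complex \<Rightarrow> complex" and \<alpha> h :: real
  assumes h_pos: "0 < h"
    and holo_v: "v holomorphic_on strip h"
    and periodic_v: "\<And>z. z \<in> strip h \<Longrightarrow> v (z + of_real (2 * pi)) = v z"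
    and bounded_v: "bounded (v ` strip h)"
    and real_v: "\<And>x::real. v (of_real x) \<in> \<real>"
begin

lemma holomorphic_on_v_shift: "(\<lambda>z. v (z + of_real c)) holomorphic_on strip h"
proof -
  have "(v \<circ> (\<lambda>z. z + of_real c)) holomorphic_on strip h"
    by (rule holomorphic_on_compose_gen) (auto intro!: holomorphic_intros holo_v)
  thus ?thesis by (simp add: o_def)
qed

lemma holomorphic_on_Mn_nth: "(\<lambda>z. Mn v \<alpha> n E z $ i $ j) holomorphic_on strip h"
proof (induction n arbitrary: i j)
  case 0 then show ?case by (simp add: mat_def)
next
  case (Suc n)
  have Smat: "(\<lambda>z. Smat v E (z + of_real c) $ i $ k) holomorphic_on strip h" for c k
    using exhaust_2[of i] exhaust_2[of k] holomorphic_on_v_shift[of c]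
    by (auto simp: Smat_nth intro!: holomorphic_intros)
  show ?case
    unfolding Mn.simps matrix_matrix_mult_2 by (intro holomorphic_on_add holomorphic_on_mult Smat Suc.IH)
qed

lemma continuous_on_Mn: "continuous_on (strip h) (\<lambda>z. Mn v \<alpha> n E z)"
proof -
  have "continuous_on (strip h) (\<lambda>z. \<chi> i j. Mn v \<alpha> n E z $ i $ j)"
    by (intro continuous_on_vec_lambda holomorphic_on_imp_continuous_on holomorphic_on_Mn_nth)
  thus ?thesis by simp
qed

lemma v_periodic_shift:
  "z \<in> strip h \<Longrightarrow> v (z + of_real (2*pi) + of_real c) = v (z + of_real c)"
  using periodic_v[of "z + of_real c"] by (simp add: algebra_simps)

lemma Mn_periodic: "z \<in> strip h \<Longrightarrow> Mn v \<alpha> n E (z + of_real (2*pi)) = Mn v \<alpha> n E z"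
  by (induction n) (simp_all add: Smat_def v_periodic_shift del: of_real_mult)

definition log_Mn :: "nat \<Rightarrow> complex \<Rightarrow> complex \<Rightarrow> real" where
  "log_Mn n E z = ln (mat_opnorm (Mn v \<alpha> n E z))"

definition mean_log_Mn :: "complex \<Rightarrow> real \<Rightarrow> nat \<Rightarrow> real" where
  "mean_log_Mn E y n = integral {0..2*pi} (\<lambda>x. log_Mn n E (Complex x y))"

lemma log_Mn_nonneg: "0 \<le> log_Mn n E z"
  unfolding log_Mn_def using mat_opnorm_Mn_ge_1 by simp

lemma continuous_on_log_Mn:
  assumes "\<bar>y\<bar> < h" shows "continuous_on S (\<lambda>x. log_Mn n E (Complex x y))"
  unfolding log_Mn_def
proof (rule continuous_on_ln)
  show "continuous_on S (\<lambda>x. mat_opnorm (Mn v \<alpha> n E (Complex x y)))"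
    by (rule continuous_on_compose2[OF continuous_on_mat_opnorm
          continuous_on_horizontal_line[OF continuous_on_Mn assms]]) auto
  show "\<forall>x\<in>S. mat_opnorm (Mn v \<alpha> n E (Complex x y)) \<noteq> 0"
    using mat_opnorm_Mn_ge_1[of v \<alpha> n E] by (metis not_one_le_zero)
qed

lemma integrable_log_Mn: "\<bar>y\<bar> < h \<Longrightarrow> (\<lambda>x. log_Mn n E (Complex x y)) integrable_on {a..b}"
  by (rule integrable_continuous_interval[OF continuous_on_log_Mn])

lemma log_Mn_add_le: "log_Mn (m + n) E z \<le> log_Mn m E (z + of_real (real n * \<alpha>)) + log_Mn n E z"
proof -
  let ?A = "mat_opnorm (Mn v \<alpha> (m + n) E z)"
  let ?B = "mat_opnorm (Mn v \<alpha> m E (z + of_real (real n * \<alpha>)))"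
  let ?C = "mat_opnorm (Mn v \<alpha> n E z)"
  have pos: "0 < ?A" "0 < ?B" "0 < ?C"
    using mat_opnorm_Mn_ge_1[of v \<alpha>] by (auto intro: less_le_trans[OF zero_less_one])
  have "?A \<le> ?B * ?C" unfolding Mn_add by (rule mat_opnorm_mult_le)
  hence "ln ?A \<le> ln (?B * ?C)" using pos by (subst ln_le_cancel_iff) auto
  also have "\<dots> = ln ?B + ln ?C" by (rule ln_mult_pos[OF pos(2,3)])
  finally show ?thesis unfolding log_Mn_def .
qed

lemma mean_log_Mn_shift:
  assumes y: "\<bar>y\<bar> < h"
  shows "integral {0..2*pi} (\<lambda>x. log_Mn m E (Complex x y + of_real c)) = mean_log_Mn E y m"
proof -
  have "log_Mn m E (Complex (x + 2*pi) y) = log_Mn m E (Complex x y)" for x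
  proof -
    have "Complex (x + 2*pi) y = Complex x y + of_real (2*pi)" by (simp add: complex_eq_iff)
    thus ?thesis unfolding log_Mn_def using Mn_periodic[of "Complex x y" m E] y by simp
  qed
  hence "integral {0..2*pi} (\<lambda>x. (\<lambda>x. log_Mn m E (Complex x y)) (x + c)) = mean_log_Mn E y m"
    unfolding mean_log_Mn_def by (intro integral_periodic_shift continuous_on_log_Mn y) auto
  thus ?thesis by (simp add: Complex_add_of_real)
qed

lemma mean_log_Mn_subadditive:
  assumes y: "\<bar>y\<bar> < h"
  shows "mean_log_Mn E y (m + n) \<le> mean_log_Mn E y m + mean_log_Mn E y n"
proof -
  have shifted: "(\<lambda>x. log_Mn m E (Complex x y + of_real c)) integrable_on {0..2*pi}" for c
    using integrable_shift_real_ivl[where c=c, OF integrable_log_Mn[OF y, where a=c and b="2*pi + c"]]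
    by (simp add: Complex_add_of_real)
  have "mean_log_Mn E y (m + n) \<le>
      integral {0..2*pi} (\<lambda>x. log_Mn m E (Complex x y + of_real (real n * \<alpha>)) + log_Mn n E (Complex x y))"
    unfolding mean_log_Mn_def
    by (intro integral_le integrable_log_Mn y integrable_add shifted log_Mn_add_le)
  also have "\<dots> = mean_log_Mn E y m + mean_log_Mn E y n"
    unfolding integral_add[OF shifted integrable_log_Mn[OF y]] mean_log_Mn_shift[OF y] mean_log_Mn_def ..
  finally show ?thesis .
qed

lemma LIMSEQ_mean_log_Mn:
  assumes y: "\<bar>y\<bar> < h"
  shows "(\<lambda>n. mean_log_Mn E y n / real n) \<longlonglongrightarrow> 2*pi * Lyap v \<alpha> E y"
proof -
  have conv: "convergent (\<lambda>n. mean_log_Mn E y n / real n)"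
    using mean_log_Mn_subadditive[OF y] integral_nonneg[OF integrable_log_Mn[OF y] log_Mn_nonneg]
    unfolding mean_log_Mn_def by (intro fekete_convergent) auto
  have "(\<lambda>n. (1 / (2 * pi)) * integral {0..2*pi} (\<lambda>x. (1 / real n) * ln (mat_opnorm (Mn v \<alpha> n E (Complex x y)))))
      = (\<lambda>n. (1 / (2*pi)) * (mean_log_Mn E y n / real n))"
    using integrable_log_Mn[OF y] unfolding mean_log_Mn_def log_Mn_def by (simp add: integral_mult)
  moreover have "(\<lambda>n. (1 / (2*pi)) * (mean_log_Mn E y n / real n))
      \<longlonglongrightarrow> (1 / (2*pi)) * lim (\<lambda>n. mean_log_Mn E y n / real n)"
    using conv by (intro tendsto_mult tendsto_const) (simp add: convergent_LIMSEQ_iff)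
  ultimately have "Lyap v \<alpha> E y = (1 / (2*pi)) * lim (\<lambda>n. mean_log_Mn E y n / real n)"
    unfolding Lyap_def by (simp add: limI)
  thus ?thesis using conv by (simp add: convergent_LIMSEQ_iff)
qed

text \<open>Convexity in \<open>y\<close> is proved for the Frobenius norm, whose square is a sum of squared moduli of
  holomorphic functions; it differs from the operator norm by at most a factor \<open>\<surd>2\<close>.\<close>

definition mean_log_norm_sq_Mn :: "complex \<Rightarrow> real \<Rightarrow> nat \<Rightarrow> real" where
  "mean_log_norm_sq_Mn E y n = integral {0..2*pi} (\<lambda>x. ln ((norm (Mn v \<alpha> n E (Complex x y)))^2))"

lemma power2_norm_mat2_eq_sum:
  "(norm (A::complex^2^2))^2 = (\<Sum>k\<in>UNIV. (Re (A $ fst k $ snd k))^2 + (Im (A $ fst k $ snd k))^2)"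
proof -
  have pairs: "(\<Sum>k\<in>UNIV. F k) = (\<Sum>i\<in>UNIV. \<Sum>j\<in>UNIV. F (i, j))" for F :: "2 \<times> 2 \<Rightarrow> real"
    by (simp add: sum.cartesian_product)
  show ?thesis unfolding pairs by (simp add: sum_2 norm_mat2_eq cmod_power2 add.assoc)
qed

lemma convex_on_mean_log_norm_sq_Mn: "convex_on {-h<..<h} (\<lambda>y. mean_log_norm_sq_Mn E y n)"
proof -
  interpret periodic_holomorphic_family "\<lambda>k z. Mn v \<alpha> n E z $ fst k $ snd k" "UNIV :: (2 \<times> 2) set" h
  proof
    fix k :: "2 \<times> 2" and z
    show "(\<lambda>z. Mn v \<alpha> n E z $ fst k $ snd k) holomorphic_on strip h" by (rule holomorphic_on_Mn_nth)
    show "z \<in> strip h \<Longrightarrow> Mn v \<alpha> n E (z + of_real (2*pi)) $ fst k $ snd k = Mn v \<alpha> n E z $ fst k $ snd k"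
      by (simp only: Mn_periodic)
    show "0 < (\<Sum>k\<in>UNIV. (Re (Mn v \<alpha> n E z $ fst k $ snd k))^2 + (Im (Mn v \<alpha> n E z $ fst k $ snd k))^2)"
      unfolding power2_norm_mat2_eq_sum[symmetric] using norm_Mn_ge_1[of v \<alpha> n E z]
      by (cases "Mn v \<alpha> n E z = 0") auto
  qed simp
  have "mean_logN = (\<lambda>y. mean_log_norm_sq_Mn E y n)"
    unfolding mean_logN_def N_def mean_log_norm_sq_Mn_def power2_norm_mat2_eq_sum ..
  thus ?thesis using convex_mean_logN by simp
qed

lemma log_norm_sq_Mn_bounds:
  "2 * log_Mn n E z \<le> ln ((norm (Mn v \<alpha> n E z))^2)"
  "ln ((norm (Mn v \<alpha> n E z))^2) \<le> ln 2 + 2 * log_Mn n E z"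
proof -
  let ?M = "Mn v \<alpha> n E z"
  have pos: "0 < mat_opnorm ?M" using mat_opnorm_Mn_ge_1[of v \<alpha> n E z] by simp
  have sq: "ln ((norm ?M)^2) = 2 * ln (norm ?M)" by (simp add: ln_realpow)
  show "2 * log_Mn n E z \<le> ln ((norm ?M)^2)"
    unfolding sq log_Mn_def using pos mat_opnorm_le_norm[of ?M] by (simp add: ln_mono)
  have "ln (norm ?M) \<le> ln (sqrt 2 * mat_opnorm ?M)"
    using norm_le_sqrt2_mat_opnorm[of ?M] norm_Mn_ge_1[of v \<alpha> n E z] by (intro ln_mono) auto
  also have "\<dots> = ln 2 / 2 + log_Mn n E z" unfolding log_Mn_def using pos by (simp add: ln_mult_pos ln_sqrt)
  finally show "ln ((norm ?M)^2) \<le> ln 2 + 2 * log_Mn n E z" unfolding sq by simp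
qed

lemma LIMSEQ_mean_log_norm_sq_Mn:
  assumes y: "\<bar>y\<bar> < h"
  shows "(\<lambda>n. mean_log_norm_sq_Mn E y n / real n) \<longlonglongrightarrow> 4*pi * Lyap v \<alpha> E y"
proof -
  have cont: "continuous_on UNIV (\<lambda>x. ln ((norm (Mn v \<alpha> n E (Complex x y)))^2))" for n
  proof (rule continuous_on_ln)
    show "continuous_on UNIV (\<lambda>x. (norm (Mn v \<alpha> n E (Complex x y)))^2)"
      by (intro continuous_intros continuous_on_horizontal_line[OF continuous_on_Mn y])
    show "\<forall>x\<in>UNIV. (norm (Mn v \<alpha> n E (Complex x y)))^2 \<noteq> 0"
      using norm_Mn_ge_1[of v \<alpha> n E] by (metis not_one_le_zero power_eq_0_iff)
  qed
  have int: "(\<lambda>x. ln ((norm (Mn v \<alpha> n E (Complex x y)))^2)) integrable_on {0..2*pi}" for n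
    by (rule integrable_continuous_interval[OF continuous_on_subset[OF cont]]) simp
  have "\<bar>mean_log_norm_sq_Mn E y n - 2 * mean_log_Mn E y n\<bar> \<le> 2*pi * ln 2" for n
  proof -
    have int2: "(\<lambda>x. 2 * log_Mn n E (Complex x y)) integrable_on {0..2*pi}"
      using integrable_log_Mn[OF y] by simp
    have "2 * mean_log_Mn E y n = integral {0..2*pi} (\<lambda>x. 2 * log_Mn n E (Complex x y))"
      unfolding mean_log_Mn_def by simp
    also have "\<dots> \<le> mean_log_norm_sq_Mn E y n"
      unfolding mean_log_norm_sq_Mn_def by (intro integral_le int2 int log_norm_sq_Mn_bounds)
    finally have lower: "2 * mean_log_Mn E y n \<le> mean_log_norm_sq_Mn E y n" .
    have "mean_log_norm_sq_Mn E y n \<le> integral {0..2*pi} (\<lambda>x. ln 2 + 2 * log_Mn n E (Complex x y))"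
      unfolding mean_log_norm_sq_Mn_def
      by (intro integral_le int integrable_add[OF integrable_const_ivl int2] log_norm_sq_Mn_bounds)
    also have "\<dots> = 2*pi * ln 2 + 2 * mean_log_Mn E y n"
      unfolding mean_log_Mn_def by (simp add: integral_add[OF integrable_const_ivl int2])
    finally show ?thesis using lower by linarith
  qed
  hence "(\<lambda>n. (mean_log_norm_sq_Mn E y n - 2 * mean_log_Mn E y n) / real n) \<longlonglongrightarrow> 0"
    by (rule LIMSEQ_bounded_divide_real)
  hence "(\<lambda>n. (mean_log_norm_sq_Mn E y n - 2 * mean_log_Mn E y n) / real n + 2 * (mean_log_Mn E y n / real n))
      \<longlonglongrightarrow> 0 + 2 * (2*pi * Lyap v \<alpha> E y)"
    by (intro tendsto_add tendsto_mult tendsto_const LIMSEQ_mean_log_Mn y)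
  thus ?thesis by (simp add: diff_divide_distrib mult.assoc)
qed

lemma convex_on_Lyap: "convex_on {-h<..<h} (Lyap v \<alpha> E)"
proof -
  have "convex_on {-h<..<h} (\<lambda>y. 4*pi * Lyap v \<alpha> E y)"
  proof (rule convex_on_LIMSEQ)
    show "convex_on {-h<..<h} (\<lambda>y. inverse (real n) * mean_log_norm_sq_Mn E y n)" for n
      by (rule convex_on_cmul[OF _ convex_on_mean_log_norm_sq_Mn]) simp
    show "(\<lambda>n. inverse (real n) * mean_log_norm_sq_Mn E y n) \<longlonglongrightarrow> 4*pi * Lyap v \<alpha> E y"
      if "y \<in> {-h<..<h}" for y
      using LIMSEQ_mean_log_norm_sq_Mn[of y E] that by (simp add: abs_less_iff divide_inverse_commute)
  qed simp
  from convex_on_cmul[OF _ this, of "1 / (4*pi)"] show ?thesis by simp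
qed

lemma bounded_v_obtain: obtains B where "0 \<le> B" "\<And>z. z \<in> strip h \<Longrightarrow> cmod (v z) \<le> B"
proof -
  obtain B where "\<forall>x\<in>v ` strip h. norm x \<le> B" using bounded_v unfolding bounded_iff by blast
  thus ?thesis by (intro that[of "max B 0"]) auto
qed

text \<open>Real on the real axis and uniformly continuous on a compact period rectangle, \<open>v\<close> has
  small imaginary part near the real axis.\<close>

lemma small_Im_v_near_real_axis:
  assumes "0 < \<epsilon>"
  obtains \<delta> where "0 < \<delta>" "\<delta> < h" "\<And>z. \<bar>Im z\<bar> < \<delta> \<Longrightarrow> \<bar>Im (v z)\<bar> < \<epsilon>"
proof -
  define K where "K = cbox (Complex 0 (-h/2)) (Complex (2*pi) (h/2))"
  have K_sub: "K \<subseteq> strip h" unfolding K_def cbox_complex_eq strip_def using h_pos by auto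
  have "uniformly_continuous_on K v"
    using holomorphic_on_imp_continuous_on[OF holo_v] K_sub
    by (intro compact_uniformly_continuous) (auto simp: K_def intro: continuous_on_subset)
  then obtain d where d: "d > 0" "\<And>x x'. x \<in> K \<Longrightarrow> x' \<in> K \<Longrightarrow> dist x' x < d \<Longrightarrow> dist (v x') (v x) < \<epsilon>"
    unfolding uniformly_continuous_on_def using assms by metis
  show ?thesis
  proof (rule that[of "min d (h/2)"])
    show "0 < min d (h/2)" "min d (h/2) < h" using d h_pos by auto
    fix z assume z: "\<bar>Im z\<bar> < min d (h/2)"
    define k where "k = \<lfloor>Re z / (2*pi)\<rfloor>"
    define z' where "z' = z - of_real (of_int k * (2*pi))"
    have "of_int k \<le> Re z / (2*pi)" "Re z / (2*pi) < of_int k + 1"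
      unfolding k_def by linarith+
    hence Re_z': "0 \<le> Re z'" "Re z' \<le> 2*pi" unfolding z'_def by (simp_all add: field_simps)
    have v_z': "v z' = v z"
    proof -
      have "v (z' + of_real t + of_real (2*pi)) = v (z' + of_real t)" for t
        using periodic_v[of "z' + of_real t"] z h_pos by (simp add: strip_def z'_def)
      hence "v (z' + of_real (t + 2*pi)) = v (z' + of_real t)" for t by (simp add: add.assoc)
      from periodic_add_int_mult[of "\<lambda>t. v (z' + of_real t)", OF this, of 0 k]
      show ?thesis by (simp add: z'_def)
    qed
    have in_K: "z' \<in> K" "of_real (Re z') \<in> K"
      unfolding K_def cbox_complex_eq using Re_z' z h_pos by (auto simp: z'_def)
    have "dist z' (of_real (Re z')) < d"
      using z by (simp add: dist_norm cmod_def z'_def)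
    hence "cmod (v z' - v (of_real (Re z'))) < \<epsilon>" using d(2)[OF in_K(2,1)] by (simp add: dist_norm)
    moreover have "Im (v (of_real (Re z'))) = 0" using real_v[of "Re z'"] by (simp add: complex_is_Real_iff)
    ultimately show "\<bar>Im (v z)\<bar> < \<epsilon>"
      using abs_Im_le_cmod[of "v z' - v (of_real (Re z'))"] v_z' by simp
  qed
qed

text \<open>The projective action of the transfer matrices: \<open>M\<^sub>k (w, 1)\<close> is proportional to \<open>(r\<^sub>k, 1)\<close>.\<close>

primrec riccati :: "complex \<Rightarrow> complex \<Rightarrow> complex \<Rightarrow> nat \<Rightarrow> complex" where
  "riccati E w z 0 = w"
| "riccati E w z (Suc k) = E - v (z + of_real (real (Suc k) * \<alpha>)) - 1 / riccati E w z k"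

lemma Mn_mult_vector_riccati:
  assumes "\<And>j. j < k \<Longrightarrow> riccati E w z j \<noteq> 0"
  shows "Mn v \<alpha> k E z *v vector [w, 1] = (\<Prod>j<k. riccati E w z j) *s vector [riccati E w z k, 1]"
  using assms
proof (induction k)
  case 0
  show ?case by (simp add: matrix_vector_mul_lid)
next
  case (Suc k)
  have "riccati E w z k \<noteq> 0" using Suc.prems by simp
  moreover have "Mn v \<alpha> k E z *v vector [w, 1] = (\<Prod>j<k. riccati E w z j) *s vector [riccati E w z k, 1]"
    using Suc by simp
  ultimately show ?case
    by (simp add: Smat_mult_vector matrix_vector_mul_assoc[symmetric] vec_eq_iff forall_2 field_simps)
qed

end

section \<open>Energies off the real axis\<close>

text \<open>Near the real axis, \<open>E - v\<close> stays in a half-plane \<open>\<sigma> Im \<ge> c\<close>; this is all that is used about \<open>E \<notin> \<real>\<close>.\<close>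

locale energy_off_axis = analytic_potential +
  fixes E :: complex and \<sigma> c \<delta> B :: real
  assumes sign: "\<sigma> = 1 \<or> \<sigma> = -1"
    and c_pos: "0 < c" and delta_pos: "0 < \<delta>" and delta_le_h: "\<delta> \<le> h"
    and Im_E_minus_v_ge: "\<And>z. \<bar>Im z\<bar> < \<delta> \<Longrightarrow> c \<le> \<sigma> * Im (E - v z)"
    and B_nonneg: "0 \<le> B" and norm_v_le: "\<And>z. z \<in> strip h \<Longrightarrow> cmod (v z) \<le> B"
begin

definition "riccati_bound = cmod E + B + 1 + 1 / c"

lemma abs_sign: "\<bar>\<sigma>\<bar> = 1"
  using sign by auto

lemma sign_mult_Im_le: "\<sigma> * Im u \<le> \<bar>Im u\<bar>"
  using sign by auto

lemma riccati_in_half_plane: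
  assumes z: "\<bar>Im z\<bar> < \<delta>" and w: "0 < \<sigma> * Im w"
  shows "0 < \<sigma> * Im (riccati E w z k)" and "1 \<le> k \<Longrightarrow> c \<le> \<sigma> * Im (riccati E w z k)"
proof -
  have "0 < \<sigma> * Im (riccati E w z k) \<and> (1 \<le> k \<longrightarrow> c \<le> \<sigma> * Im (riccati E w z k))"
  proof (induction k)
    case (Suc k)
    let ?u = "riccati E w z k"
    have "c \<le> \<sigma> * Im (E - v (z + of_real (real (Suc k) * \<alpha>)))" by (rule Im_E_minus_v_ge) (simp add: z)
    moreover have "0 \<le> \<sigma> * Im (- (1 / ?u))" using Suc by (simp add: Im_one_div)
    ultimately have "c \<le> \<sigma> * Im (riccati E w z (Suc k))" by (simp add: algebra_simps)
    thus ?case using c_pos by simp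
  qed (use w in simp)
  thus "0 < \<sigma> * Im (riccati E w z k)" and "1 \<le> k \<Longrightarrow> c \<le> \<sigma> * Im (riccati E w z k)" by auto
qed

lemma riccati_nonzero: "\<bar>Im z\<bar> < \<delta> \<Longrightarrow> 0 < \<sigma> * Im w \<Longrightarrow> riccati E w z k \<noteq> 0"
  using riccati_in_half_plane(1)[of z w k] by auto

lemma norm_riccati_ge: "\<bar>Im z\<bar> < \<delta> \<Longrightarrow> 0 < \<sigma> * Im w \<Longrightarrow> 1 \<le> k \<Longrightarrow> c \<le> cmod (riccati E w z k)"
  using riccati_in_half_plane(2)[of z w k] sign_mult_Im_le[of "riccati E w z k"]
    abs_Im_le_cmod[of "riccati E w z k"] by linarith

lemma norm_riccati_le:
  assumes z: "\<bar>Im z\<bar> < \<delta>" and w: "0 < \<sigma> * Im w" "1 \<le> cmod w" and k: "1 \<le> k"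
  shows "cmod (riccati E w z k) \<le> riccati_bound"
proof -
  obtain j where j: "k = Suc j" using k by (cases k) auto
  let ?t = "z + of_real (real (Suc j) * \<alpha>)"
  have v_t: "cmod (v ?t) \<le> B" by (rule norm_v_le) (use z delta_le_h in \<open>simp add: strip_def\<close>)
  have inv: "cmod (1 / riccati E w z j) \<le> 1 + 1 / c"
  proof (cases j)
    case 0
    have "cmod (1 / riccati E w z j) = 1 / cmod w" unfolding 0 by (simp add: norm_divide)
    moreover have "1 / cmod w \<le> 1" using w(2) by (simp add: divide_le_eq)
    moreover have "0 \<le> 1 / c" using c_pos by simp
    ultimately show ?thesis by linarith
  next
    case (Suc i)
    have "c \<le> \<bar>Im (riccati E w z j)\<bar>"
      using riccati_in_half_plane(2)[OF z w(1), of j] sign_mult_Im_le[of "riccati E w z j"] Suc by auto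
    thus ?thesis using norm_one_div_le[OF c_pos] by fastforce
  qed
  have "cmod (riccati E w z k) \<le> cmod E + cmod (v ?t) + cmod (1 / riccati E w z j)"
    unfolding j riccati.simps
    using norm_triangle_ineq4[of "E - v ?t" "1 / riccati E w z j"] norm_triangle_ineq4[of E "v ?t"] by linarith
  also have "\<dots> \<le> riccati_bound" unfolding riccati_bound_def using v_t inv by simp
  finally show ?thesis .
qed

lemma holomorphic_on_riccati:
  assumes w: "0 < \<sigma> * Im w" shows "(\<lambda>z. riccati E w z k) holomorphic_on strip \<delta>"
proof (induction k)
  case (Suc k)
  have "(\<lambda>z. v (z + of_real (real (Suc k) * \<alpha>))) holomorphic_on strip \<delta>"
    by (rule holomorphic_on_subset[OF holomorphic_on_v_shift strip_mono[OF delta_le_h]])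
  thus ?case unfolding riccati.simps
    by (intro holomorphic_intros Suc) (use riccati_nonzero w in \<open>auto simp: strip_def\<close>)
qed simp

lemma riccati_periodic: "z \<in> strip \<delta> \<Longrightarrow> riccati E w (z + of_real (2*pi)) k = riccati E w z k"
  using strip_mono[OF delta_le_h]
  by (induction k) (auto simp: v_periodic_shift simp del: of_real_mult)

text \<open>\<open>log |r\<^sub>k|\<close> is the real part of a holomorphic logarithm, since \<open>r\<^sub>k\<close> stays in a half-plane.\<close>

lemma mean_log_norm_riccati_eq:
  assumes w: "0 < \<sigma> * Im w" and y1: "\<bar>y1\<bar> < \<delta>" and y2: "\<bar>y2\<bar> < \<delta>"
  shows "integral {0..2*pi} (\<lambda>x. ln (cmod (riccati E w (Complex x y1) k))) =
         integral {0..2*pi} (\<lambda>x. ln (cmod (riccati E w (Complex x y2) k)))"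
proof -
  define F where "F z = Ln (of_real \<sigma> * riccati E w z k)" for z
  have Im_pos: "0 < Im (of_real \<sigma> * riccati E w z k)" if "z \<in> strip \<delta>" for z
    using riccati_in_half_plane(1)[of z w k] that w by (simp add: strip_def)
  have "F holomorphic_on strip \<delta>"
    unfolding F_def
  proof (rule holomorphic_on_Ln')
    show "of_real \<sigma> * riccati E w z k \<notin> \<real>\<^sub>\<le>\<^sub>0" if "z \<in> strip \<delta>" for z
      using Im_pos[OF that] by (auto simp: complex_nonpos_Reals_iff)
  qed (intro holomorphic_intros holomorphic_on_riccati[OF w])
  moreover have "F (z + of_real (2*pi)) = F z" if "z \<in> strip \<delta>" for z
    unfolding F_def using riccati_periodic[OF that] by simp
  moreover have Re_F: "Re (F z) = ln (cmod (riccati E w z k))" if "z \<in> strip \<delta>" for z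
  proof -
    have "of_real \<sigma> * riccati E w z k \<noteq> 0" using Im_pos[OF that] by auto
    thus ?thesis unfolding F_def by (simp add: Re_Ln norm_mult abs_sign)
  qed
  ultimately show ?thesis
    using periodic_holomorphic_mean_Re_eq[of F \<delta> y1 y2] y1 y2 by (simp add: Re_F)
qed

lemma riccati_bound_pos: "0 < riccati_bound"
  unfolding riccati_bound_def using B_nonneg c_pos by (simp add: add_nonneg_pos)

lemma start_points:
  "0 < \<sigma> * Im (of_real \<sigma> * \<i>)" "1 \<le> cmod (of_real \<sigma> * \<i>)"
  "0 < \<sigma> * Im (of_real (2*\<sigma>) * \<i>)" "1 \<le> cmod (of_real (2*\<sigma>) * \<i>)"
  using sign by (auto simp: norm_mult)

definition "r1 z j = riccati E (of_real \<sigma> * \<i>) z j"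
definition "r2 z j = riccati E (of_real (2*\<sigma>) * \<i>) z j"

definition "contraction = 1 / (1 + c^2)"

lemma contraction_pos: "0 < contraction"
  unfolding contraction_def by (simp add: add_pos_nonneg)

lemma contraction_less_1: "contraction < 1"
  unfolding contraction_def using c_pos by (simp add: add_pos_nonneg)

lemma r1_r2_bounds:
  assumes z: "\<bar>Im z\<bar> < \<delta>" and j: "1 \<le> j"
  shows "c \<le> \<sigma> * Im (r1 z j)" "c \<le> cmod (r1 z j)" "cmod (r1 z j) \<le> riccati_bound"
    and "c \<le> \<sigma> * Im (r2 z j)" "c \<le> cmod (r2 z j)" "cmod (r2 z j) \<le> riccati_bound"
  unfolding r1_def r2_def
  using riccati_in_half_plane(2)[OF z start_points(1) j] norm_riccati_ge[OF z start_points(1) j]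
    norm_riccati_le[OF z start_points(1,2) j] riccati_in_half_plane(2)[OF z start_points(3) j]
    norm_riccati_ge[OF z start_points(3) j] norm_riccati_le[OF z start_points(3,4) j]
  by auto

lemma hyperbolic_ratio_r1_r2_Suc:
  assumes z: "\<bar>Im z\<bar> < \<delta>" and j: "1 \<le> j"
  shows "hyperbolic_ratio \<sigma> (r1 z (Suc j)) (r2 z (Suc j)) \<le> contraction^2 * hyperbolic_ratio \<sigma> (r1 z j) (r2 z j)"
proof -
  let ?e = "E - v (z + of_real (real (Suc j) * \<alpha>))"
  have "c \<le> \<sigma> * Im ?e" by (rule Im_E_minus_v_ge) (simp add: z)
  from hyperbolic_ratio_contraction[OF c_pos this r1_r2_bounds(1,4)[OF z j] sign]
  show ?thesis unfolding contraction_def r1_def r2_def by (simp only: riccati.simps)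
qed

lemma hyperbolic_ratio_r1_r2_le:
  assumes z: "\<bar>Im z\<bar> < \<delta>"
  shows "hyperbolic_ratio \<sigma> (r1 z (Suc m)) (r2 z (Suc m)) \<le> (contraction^2)^m * (2 * riccati_bound / c)^2"
proof (induction m)
  case 0
  have "cmod (r1 z 1 - r2 z 1) \<le> 2 * riccati_bound"
    using norm_triangle_ineq4[of "r1 z 1" "r2 z 1"] r1_r2_bounds(3,6)[OF z, of 1] by simp
  hence "(cmod (r1 z 1 - r2 z 1))^2 \<le> (2 * riccati_bound)^2" by (rule power_mono[OF _ norm_ge_zero])
  moreover have "c * c \<le> (\<sigma> * Im (r1 z 1)) * (\<sigma> * Im (r2 z 1))"
    using r1_r2_bounds(1,4)[OF z, of 1] c_pos by (intro mult_mono) auto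
  ultimately have "hyperbolic_ratio \<sigma> (r1 z 1) (r2 z 1) \<le> (2 * riccati_bound)^2 / (c * c)"
    unfolding hyperbolic_ratio_def using c_pos by (intro frac_le) auto
  thus ?case by (simp add: power_divide power2_eq_square)
next
  case (Suc m)
  have "hyperbolic_ratio \<sigma> (r1 z (Suc (Suc m))) (r2 z (Suc (Suc m)))
      \<le> contraction^2 * hyperbolic_ratio \<sigma> (r1 z (Suc m)) (r2 z (Suc m))"
    by (rule hyperbolic_ratio_r1_r2_Suc[OF z]) simp
  also have "\<dots> \<le> contraction^2 * ((contraction^2)^m * (2 * riccati_bound / c)^2)"
    by (rule mult_left_mono[OF Suc]) simp
  finally show ?case by (simp add: algebra_simps)
qed

lemma norm_r1_minus_r2_le:
  assumes z: "\<bar>Im z\<bar> < \<delta>"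
  shows "cmod (r1 z (Suc m) - r2 z (Suc m)) \<le> riccati_bound * (2 * riccati_bound / c) * contraction^m"
proof -
  define D where "D = (\<sigma> * Im (r1 z (Suc m))) * (\<sigma> * Im (r2 z (Suc m)))"
  have Im_le: "\<sigma> * Im (r1 z (Suc m)) \<le> riccati_bound" "\<sigma> * Im (r2 z (Suc m)) \<le> riccati_bound"
    using r1_r2_bounds(3,6)[OF z, of "Suc m"] sign_mult_Im_le[of "r1 z (Suc m)"] sign_mult_Im_le[of "r2 z (Suc m)"]
      abs_Im_le_cmod[of "r1 z (Suc m)"] abs_Im_le_cmod[of "r2 z (Suc m)"] by linarith+
  have pos: "0 < \<sigma> * Im (r1 z (Suc m))" "0 < \<sigma> * Im (r2 z (Suc m))"
    using r1_r2_bounds(1,4)[OF z, of "Suc m"] c_pos by linarith+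
  have "D \<noteq> 0" unfolding D_def using pos by (metis mult_pos_pos less_irrefl)
  hence "(cmod (r1 z (Suc m) - r2 z (Suc m)))^2 = hyperbolic_ratio \<sigma> (r1 z (Suc m)) (r2 z (Suc m)) * D"
    unfolding hyperbolic_ratio_def D_def[symmetric] by simp
  also have "\<dots> \<le> ((contraction^2)^m * (2 * riccati_bound / c)^2) * (riccati_bound * riccati_bound)"
    using hyperbolic_ratio_r1_r2_le[OF z] hyperbolic_ratio_nonneg[OF pos] Im_le pos
    unfolding D_def by (intro mult_mono) auto
  also have "\<dots> = (riccati_bound * (2 * riccati_bound / c) * contraction^m)^2"
    by (simp add: power_mult_distrib power_mult[symmetric] mult.commute power2_eq_square)
  finally show ?thesis
    by (rule power2_le_imp_le) (use contraction_pos c_pos riccati_bound_pos in simp)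
qed

text \<open>The contraction makes the two orbits exponentially close, so the sums of their logarithms
  differ by a bounded amount.\<close>

lemma sum_log_r2_minus_sum_log_r1_le:
  assumes z: "\<bar>Im z\<bar> < \<delta>"
  shows "\<bar>(\<Sum>j<n. ln (cmod (r2 z j))) - (\<Sum>j<n. ln (cmod (r1 z j)))\<bar>
    \<le> ln 2 + riccati_bound * (2 * riccati_bound / c) / c / (1 - contraction)"
proof -
  define C where "C = riccati_bound * (2 * riccati_bound / c) / c"
  define f where "f j = \<bar>ln (cmod (r2 z j)) - ln (cmod (r1 z j))\<bar>" for j
  have C_nonneg: "0 \<le> C" using c_pos riccati_bound_pos by (simp add: C_def)
  have f_0: "f 0 = ln 2" unfolding f_def r1_def r2_def using sign by (auto simp: norm_mult)
  have f_Suc: "f (Suc m) \<le> C * contraction^m" for m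
  proof -
    have "f (Suc m) \<le> \<bar>cmod (r2 z (Suc m)) - cmod (r1 z (Suc m))\<bar> / c"
      unfolding f_def by (rule abs_ln_diff_le[OF c_pos r1_r2_bounds(5,2)[OF z]]) simp_all
    also have "\<dots> \<le> cmod (r1 z (Suc m) - r2 z (Suc m)) / c"
      using c_pos norm_triangle_ineq3[of "r2 z (Suc m)" "r1 z (Suc m)"]
      by (intro divide_right_mono) (auto simp: norm_minus_commute)
    also have "\<dots> \<le> C * contraction^m"
      using divide_right_mono[OF norm_r1_minus_r2_le[OF z], of c m] c_pos by (simp add: C_def)
    finally show ?thesis .
  qed
  have "\<bar>(\<Sum>j<n. ln (cmod (r2 z j))) - (\<Sum>j<n. ln (cmod (r1 z j)))\<bar> \<le> (\<Sum>j<n. f j)"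
    unfolding f_def sum_subtractf[symmetric] by (rule sum_abs)
  also have "\<dots> \<le> ln 2 + C / (1 - contraction)"
  proof (cases n)
    case 0 thus ?thesis using C_nonneg contraction_less_1 by simp
  next
    case (Suc m)
    have "(\<Sum>j<n. f j) = f 0 + (\<Sum>j<m. f (Suc j))" unfolding Suc by (rule sum.lessThan_Suc_shift)
    also have "(\<Sum>j<m. f (Suc j)) \<le> C * (\<Sum>j<m. contraction^j)"
      unfolding sum_distrib_left by (rule sum_mono[OF f_Suc])
    also have "(\<Sum>j<m. contraction^j) \<le> 1 / (1 - contraction)"
      using contraction_less_1 contraction_pos
      by (simp add: sum_gp_strict divide_right_mono)
    finally show ?thesis using C_nonneg f_0 by (simp add: mult_left_mono divide_inverse)
  qed
  finally show ?thesis by (simp add: C_def)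
qed

lemma ln_norm_Mn_mult_vector_eq:
  assumes z: "\<bar>Im z\<bar> < \<delta>" and w: "0 < \<sigma> * Im w"
  shows "ln (norm (Mn v \<alpha> n E z *v vector [w, 1])) =
           (\<Sum>j<n. ln (cmod (riccati E w z j))) + ln (sqrt ((cmod (riccati E w z n))^2 + 1))"
proof -
  have nz: "riccati E w z j \<noteq> 0" for j by (rule riccati_nonzero[OF z w])
  define P where "P = (\<Prod>j<n. riccati E w z j)"
  have "norm (Mn v \<alpha> n E z *v vector [w, 1]) = sqrt ((cmod (P * riccati E w z n))^2 + (cmod P)^2)"
    unfolding Mn_mult_vector_riccati[OF nz] P_def by (simp add: norm_vec2_eq)
  also have "\<dots> = sqrt ((cmod P)^2 * ((cmod (riccati E w z n))^2 + 1))"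
    by (simp add: norm_mult power_mult_distrib algebra_simps)
  also have "\<dots> = cmod P * sqrt ((cmod (riccati E w z n))^2 + 1)"
    by (simp only: real_sqrt_mult real_sqrt_abs abs_norm_cancel)
  finally have norm_eq: "norm (Mn v \<alpha> n E z *v vector [w, 1]) = cmod P * sqrt ((cmod (riccati E w z n))^2 + 1)" .
  have "ln (cmod P) = (\<Sum>j<n. ln (cmod (riccati E w z j)))"
    unfolding P_def prod_norm[symmetric] using nz by (subst ln_prod) auto
  moreover have "0 < cmod P" using nz by (simp add: P_def)
  ultimately show ?thesis unfolding norm_eq by (simp add: ln_mult_pos add_nonneg_pos)
qed

lemma ln_norm_Mn_mult_vector_bounds:
  assumes z: "\<bar>Im z\<bar> < \<delta>" and w: "0 < \<sigma> * Im w" "1 \<le> cmod w"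
  shows "(\<Sum>j<n. ln (cmod (riccati E w z j))) \<le> ln (norm (Mn v \<alpha> n E z *v vector [w, 1]))"
    and "ln (norm (Mn v \<alpha> n E z *v vector [w, 1]))
      \<le> (\<Sum>j<n. ln (cmod (riccati E w z j))) + ln (sqrt ((max riccati_bound (cmod w))^2 + 1))"
proof -
  have "cmod (riccati E w z n) \<le> max riccati_bound (cmod w)"
  proof (cases "n = 0")
    case False thus ?thesis using norm_riccati_le[OF z w, of n] by (simp add: le_max_iff_disj)
  qed simp
  hence "(cmod (riccati E w z n))^2 \<le> (max riccati_bound (cmod w))^2"
    by (rule power_mono) simp
  thus "ln (norm (Mn v \<alpha> n E z *v vector [w, 1]))
      \<le> (\<Sum>j<n. ln (cmod (riccati E w z j))) + ln (sqrt ((max riccati_bound (cmod w))^2 + 1))"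
    unfolding ln_norm_Mn_mult_vector_eq[OF z w(1)] by (simp add: add_nonneg_pos)
qed (simp add: ln_norm_Mn_mult_vector_eq[OF z w(1)])

lemma ln_norm_Mn_mult_start_le:
  "ln (norm (Mn v \<alpha> n E z *v vector [of_real \<sigma> * \<i>, 1])) \<le> log_Mn n E z + ln (sqrt 2)"
proof -
  let ?M = "Mn v \<alpha> n E z" and ?X = "vector [of_real \<sigma> * \<i>, 1] :: complex^2"
  have norm_X: "norm ?X = sqrt 2" using sign by (auto simp: norm_vec2_eq norm_mult)
  have pos: "0 < mat_opnorm ?M" using mat_opnorm_Mn_ge_1[of v \<alpha> n E z] by simp
  have "?M *v ?X \<noteq> 0"
    by (simp only: Mn_mult_vector_eq_0_iff) (simp add: vec_eq_iff forall_2)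
  hence "ln (norm (?M *v ?X)) \<le> ln (mat_opnorm ?M * sqrt 2)"
    using norm_mult_vector_le_mat_opnorm[of ?M ?X] norm_X by (intro ln_mono) auto
  thus ?thesis unfolding log_Mn_def using pos by (simp add: ln_mult_pos)
qed

lemma log_Mn_ge_sum_log_r1:
  assumes z: "\<bar>Im z\<bar> < \<delta>"
  shows "(\<Sum>j<n. ln (cmod (r1 z j))) - ln (sqrt 2) \<le> log_Mn n E z"
  using ln_norm_Mn_mult_vector_bounds(1)[OF z start_points(1,2), of n] ln_norm_Mn_mult_start_le[of n z]
  unfolding r1_def by linarith

text \<open>The operator norm is controlled by the images of the two start vectors, whose logarithms
  differ by a bounded amount.\<close>

lemma log_Mn_le_sum_log_r1:
  obtains K where "\<And>z n. \<bar>Im z\<bar> < \<delta> \<Longrightarrow> log_Mn n E z \<le> (\<Sum>j<n. ln (cmod (r1 z j))) + K"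
proof -
  define L where "L = ln (sqrt ((max riccati_bound 2)^2 + 1))"
  define K' where "K' = ln 2 + riccati_bound * (2 * riccati_bound / c) / c / (1 - contraction) + L"
  show ?thesis
  proof (rule that[of "ln (6 * (1 + exp K')) + L"])
    fix z n assume z: "\<bar>Im z\<bar> < \<delta>"
    let ?M = "Mn v \<alpha> n E z"
    let ?X1 = "?M *v vector [of_real \<sigma> * \<i>, 1]" and ?X2 = "?M *v vector [of_real (2*\<sigma>) * \<i>, 1]"
    have cmod_start: "cmod (of_real \<sigma> * \<i>) = 1" "cmod (of_real (2*\<sigma>) * \<i>) = 2"
      using sign by (auto simp: norm_mult)
    have L1: "ln (sqrt ((max riccati_bound 1)^2 + 1)) \<le> L"
      unfolding L_def using riccati_bound_pos by (simp add: add_pos_nonneg power_mono)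
    have X1: "(\<Sum>j<n. ln (cmod (r1 z j))) \<le> ln (norm ?X1)"
        "ln (norm ?X1) \<le> (\<Sum>j<n. ln (cmod (r1 z j))) + L"
      using ln_norm_Mn_mult_vector_bounds[OF z start_points(1,2), of n] L1 cmod_start
      unfolding r1_def by auto
    have "ln (norm ?X2) \<le> (\<Sum>j<n. ln (cmod (r2 z j))) + L"
      using ln_norm_Mn_mult_vector_bounds(2)[OF z start_points(3,4), of n] cmod_start
      unfolding r2_def L_def by simp
    hence "ln (norm ?X2) \<le> ln (norm ?X1) + K'"
      using sum_log_r2_minus_sum_log_r1_le[OF z, of n] X1(1) unfolding K'_def by linarith
    moreover have pos: "0 < norm ?X1" "0 < norm ?X2"
      by (simp_all only: zero_less_norm_iff Mn_mult_vector_eq_0_iff) (simp_all add: vec_eq_iff forall_2)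
    ultimately have X2: "norm ?X2 \<le> norm ?X1 * exp K'"
      by (metis exp_add exp_le_cancel_iff exp_ln)
    have "mat_opnorm ?M \<le> 6 * (norm ?X1 + norm ?X2)"
      using mat_opnorm_le_norm[of ?M] norm_le_norms_at_two_vectors[OF abs_sign, of ?M] by linarith
    also have "\<dots> \<le> 6 * (1 + exp K') * norm ?X1" using X2 by (simp add: algebra_simps)
    finally have "log_Mn n E z \<le> ln (6 * (1 + exp K') * norm ?X1)"
      unfolding log_Mn_def using mat_opnorm_Mn_ge_1[of v \<alpha> n E z] by (intro ln_mono) auto
    also have "\<dots> = ln (6 * (1 + exp K')) + ln (norm ?X1)"
      using pos by (intro ln_mult_pos) (auto simp: add_pos_pos)
    finally show "log_Mn n E z \<le> (\<Sum>j<n. ln (cmod (r1 z j))) + (ln (6 * (1 + exp K')) + L)"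
      using X1(2) by linarith
  qed
qed

lemma continuous_on_log_norm_r1:
  assumes y: "\<bar>y\<bar> < \<delta>" shows "continuous_on S (\<lambda>x. ln (cmod (r1 (Complex x y) j)))"
proof (rule continuous_on_ln)
  have "continuous_on (strip \<delta>) (\<lambda>z. r1 z j)"
    unfolding r1_def by (rule holomorphic_on_imp_continuous_on[OF holomorphic_on_riccati[OF start_points(1)]])
  thus "continuous_on S (\<lambda>x. cmod (r1 (Complex x y) j))"
    by (intro continuous_intros continuous_on_horizontal_line[OF _ y])
  show "\<forall>x\<in>S. cmod (r1 (Complex x y) j) \<noteq> 0"
    using riccati_nonzero[OF _ start_points(1)] y by (simp add: r1_def)
qed

lemma integrable_sum_log_r1:
  "\<bar>y\<bar> < \<delta> \<Longrightarrow> (\<lambda>x. \<Sum>j<n. ln (cmod (r1 (Complex x y) j))) integrable_on {a..b}"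
  by (intro integrable_sum integrable_continuous_interval continuous_on_log_norm_r1) auto

lemma mean_sum_log_r1_eq:
  assumes y: "\<bar>y\<bar> < \<delta>"
  shows "integral {0..2*pi} (\<lambda>x. \<Sum>j<n. ln (cmod (r1 (Complex x y) j)))
       = integral {0..2*pi} (\<lambda>x. \<Sum>j<n. ln (cmod (r1 (Complex x 0) j)))"
proof -
  have y0: "\<bar>0::real\<bar> < \<delta>" using delta_pos by simp
  have int: "(\<lambda>x. ln (cmod (r1 (Complex x y') j))) integrable_on {0..2*pi}" if "\<bar>y'\<bar> < \<delta>" for y' j
    by (rule integrable_continuous_interval[OF continuous_on_log_norm_r1[OF that]])
  have "integral {0..2*pi} (\<lambda>x. ln (cmod (r1 (Complex x y) j)))
      = integral {0..2*pi} (\<lambda>x. ln (cmod (r1 (Complex x 0) j)))" for j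
    unfolding r1_def by (rule mean_log_norm_riccati_eq[OF start_points(1) y y0])
  thus ?thesis using int[OF y] int[OF y0] by (simp add: integral_sum)
qed

lemma Lyap_eq_Lyap_0:
  assumes y: "\<bar>y\<bar> < \<delta>" shows "Lyap v \<alpha> E y = Lyap v \<alpha> E 0"
proof -
  obtain K where K: "\<And>z n. \<bar>Im z\<bar> < \<delta> \<Longrightarrow> log_Mn n E z \<le> (\<Sum>j<n. ln (cmod (r1 z j))) + K"
    using log_Mn_le_sum_log_r1 by blast
  define C where "C = max K (ln (sqrt 2))"
  define S where "S y' n = integral {0..2*pi} (\<lambda>x. \<Sum>j<n. ln (cmod (r1 (Complex x y') j)))" for y' n
  have close: "\<bar>mean_log_Mn E y' n - S y' n\<bar> \<le> C * (2*pi)" if y': "\<bar>y'\<bar> < \<delta>" for y' n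
  proof -
    have "\<bar>mean_log_Mn E y' n - S y' n\<bar> \<le> C * (2*pi - 0)"
      unfolding mean_log_Mn_def S_def
    proof (rule abs_integral_diff_le)
      show "(\<lambda>x. log_Mn n E (Complex x y')) integrable_on {0..2*pi}"
        using y' delta_le_h by (intro integrable_log_Mn) simp
      show "\<bar>log_Mn n E (Complex x y') - (\<Sum>j<n. ln (cmod (r1 (Complex x y') j)))\<bar> \<le> C" for x
        using K[of "Complex x y'" n] log_Mn_ge_sum_log_r1[of "Complex x y'" n] y' unfolding C_def by auto
    qed (use y' integrable_sum_log_r1 in auto)
    thus ?thesis by simp
  qed
  have "\<bar>mean_log_Mn E y n - mean_log_Mn E 0 n\<bar> \<le> 2 * (C * (2*pi))" for n
    using close[OF y, of n] close[of 0 n] delta_pos mean_sum_log_r1_eq[OF y, of n] unfolding S_def by simp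
  hence "(\<lambda>n. (mean_log_Mn E y n - mean_log_Mn E 0 n) / real n) \<longlonglongrightarrow> 0"
    by (rule LIMSEQ_bounded_divide_real)
  moreover have "(\<lambda>n. (mean_log_Mn E y n - mean_log_Mn E 0 n) / real n)
      \<longlonglongrightarrow> 2*pi * Lyap v \<alpha> E y - 2*pi * Lyap v \<alpha> E 0"
    unfolding diff_divide_distrib using y delta_le_h h_pos
    by (intro tendsto_diff LIMSEQ_mean_log_Mn) auto
  ultimately show ?thesis using LIMSEQ_unique by fastforce
qed

text \<open>Growth: for \<open>X\<^sub>k = M\<^sub>k (\<sigma>\<i>, 1)\<close> the quantity \<open>J\<^sub>k = \<sigma> Im (X\<^sub>k\<^sub>,\<^sub>1 conj X\<^sub>k\<^sub>,\<^sub>2)\<close> increases by at least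
  \<open>c |X\<^sub>k\<^sub>,\<^sub>1|\<^sup>2\<close> per step and is dominated by \<open>|X\<^sub>k|\<^sup>2 / 2\<close>, so it grows by a factor \<open>1 + 2c\<close> every two steps.\<close>

definition "X z k = Mn v \<alpha> k E z *v vector [of_real \<sigma> * \<i>, 1]"
definition "J z k = \<sigma> * Im (X z k $ 1 * cnj (X z k $ 2))"

lemma X_Suc:
  "X z (Suc k) $ 1 = (E - v (z + of_real (real (Suc k) * \<alpha>))) * X z k $ 1 - X z k $ 2"
  "X z (Suc k) $ 2 = X z k $ 1"
  unfolding X_def by (simp_all only: Mn.simps matrix_vector_mul_assoc[symmetric] Smat_mult_vector vector_2)

lemma J_0: "J z 0 = 1"
  unfolding J_def X_def using sign by (auto simp: matrix_vector_mul_lid)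

lemma J_Suc_ge:
  assumes z: "\<bar>Im z\<bar> < \<delta>" shows "J z k + c * (cmod (X z k $ 1))^2 \<le> J z (Suc k)"
proof -
  let ?e = "E - v (z + of_real (real (Suc k) * \<alpha>))"
  let ?x = "X z k $ 1" and ?y = "X z k $ 2"
  have "J z (Suc k) = \<sigma> * Im (?e * (?x * cnj ?x) - ?y * cnj ?x)"
    unfolding J_def X_Suc by (simp add: algebra_simps)
  also have "\<dots> = (\<sigma> * Im ?e) * (cmod ?x)^2 + J z k"
    unfolding J_def complex_norm_square[symmetric] by (simp add: algebra_simps)
  finally have "J z (Suc k) = (\<sigma> * Im ?e) * (cmod ?x)^2 + J z k" .
  moreover have "c \<le> \<sigma> * Im ?e" by (rule Im_E_minus_v_ge) (simp add: z)
  ultimately show ?thesis by (simp add: mult_right_mono)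
qed

lemma J_mono:
  assumes z: "\<bar>Im z\<bar> < \<delta>" shows "J z k \<le> J z (Suc k)"
proof -
  have "0 \<le> c * (cmod (X z k $ 1))^2" using c_pos by simp
  thus ?thesis using J_Suc_ge[OF z, of k] by linarith
qed

lemma J_ge_1:
  assumes z: "\<bar>Im z\<bar> < \<delta>" shows "1 \<le> J z k"
proof (induction k)
  case (Suc k) thus ?case using J_mono[OF z, of k] by linarith
qed (simp add: J_0)

lemma two_J_le_norm_X: "2 * J z k \<le> (norm (X z k))^2"
proof -
  have "J z k \<le> cmod (X z k $ 1) * cmod (X z k $ 2)"
    unfolding J_def using abs_Im_le_cmod[of "X z k $ 1 * cnj (X z k $ 2)"] sign
    by (auto simp: norm_mult abs_mult)
  moreover have "2 * (cmod (X z k $ 1) * cmod (X z k $ 2)) \<le> (cmod (X z k $ 1))^2 + (cmod (X z k $ 2))^2"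
    using zero_le_power2[of "cmod (X z k $ 1) - cmod (X z k $ 2)"] by (simp add: power2_eq_square algebra_simps)
  ultimately show ?thesis by (simp add: norm_vec2_eq)
qed

lemma J_Suc_Suc_ge:
  assumes z: "\<bar>Im z\<bar> < \<delta>" shows "(1 + 2*c) * J z k \<le> J z (Suc (Suc k))"
proof -
  have "J z k + c * (norm (X z (Suc k)))^2 \<le> J z (Suc (Suc k))"
    using J_Suc_ge[OF z, of k] J_Suc_ge[OF z, of "Suc k"]
    by (simp add: norm_vec2_eq X_Suc(2) algebra_simps)
  moreover have "c * (2 * J z k) \<le> c * (norm (X z (Suc k)))^2"
    using two_J_le_norm_X[of z "Suc k"] J_mono[OF z, of k] c_pos by (intro mult_left_mono) auto
  ultimately show ?thesis by (simp add: algebra_simps)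
qed

lemma J_ge_power: "\<bar>Im z\<bar> < \<delta> \<Longrightarrow> (1 + 2*c)^(k div 2) \<le> J z k"
proof (induction k rule: less_induct)
  case (less k)
  show ?case
  proof (cases "k < 2")
    case True thus ?thesis using J_ge_1[OF less.prems] by simp
  next
    case False
    define m where "m = k - 2"
    have k: "k = Suc (Suc m)" using False by (simp add: m_def)
    have "(1 + 2*c)^(k div 2) = (1 + 2*c) * (1 + 2*c)^(m div 2)" by (simp add: k)
    also have "\<dots> \<le> (1 + 2*c) * J z m" using less k c_pos by (intro mult_left_mono) auto
    also have "\<dots> \<le> J z k" unfolding k by (rule J_Suc_Suc_ge[OF less.prems])
    finally show ?thesis .
  qed
qed

lemma log_Mn_ge_growth:
  assumes z: "\<bar>Im z\<bar> < \<delta>" shows "real (n div 2) / 2 * ln (1 + 2*c) \<le> log_Mn n E z"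
proof -
  let ?M = "Mn v \<alpha> n E z"
  have norm_start: "norm (vector [of_real \<sigma> * \<i>, 1] :: complex^2) = sqrt 2"
    using sign by (auto simp: norm_vec2_eq norm_mult)
  have "2 * (1 + 2*c)^(n div 2) \<le> (norm (X z n))^2"
    using J_ge_power[OF z, of n] two_J_le_norm_X[of z n] by linarith
  also have "\<dots> \<le> (mat_opnorm ?M * sqrt 2)^2"
    unfolding X_def using norm_mult_vector_le_mat_opnorm[of ?M "vector [of_real \<sigma> * \<i>, 1]"] norm_start
    by (intro power_mono) auto
  finally have "(1 + 2*c)^(n div 2) \<le> (mat_opnorm ?M)^2" by (simp add: power_mult_distrib)
  hence "ln ((1 + 2*c)^(n div 2)) \<le> ln ((mat_opnorm ?M)^2)"
    using c_pos by (intro ln_mono) auto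
  thus ?thesis unfolding log_Mn_def by (simp add: ln_realpow)
qed

lemma Lyap_0_pos: "0 < Lyap v \<alpha> E 0"
proof -
  let ?g = "pi / 2 * ln (1 + 2*c)"
  have "?g * (1 - 1 / real n) \<le> mean_log_Mn E 0 n / real n" if n: "1 \<le> n" for n
  proof -
    let ?A = "(real n - 1) / 4 * ln (1 + 2*c)" and ?B = "real (n div 2) / 2 * ln (1 + 2*c)"
    have "real n - 1 \<le> 2 * real (n div 2)" by linarith
    hence "?A \<le> ?B" using c_pos by (intro mult_right_mono) auto
    hence "2*pi * ?A \<le> 2*pi * ?B" by (rule mult_left_mono) simp
    also have "\<dots> = integral {0..2*pi} (\<lambda>x. ?B)" by simp
    also have "\<dots> \<le> mean_log_Mn E 0 n"
      unfolding mean_log_Mn_def using h_pos delta_pos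
      by (intro integral_le integrable_const_ivl integrable_log_Mn log_Mn_ge_growth) auto
    finally have "2*pi * ?A \<le> mean_log_Mn E 0 n" .
    hence "2*pi * ?A / real n \<le> mean_log_Mn E 0 n / real n" by (rule divide_right_mono) simp
    moreover have "?g * (1 - 1 / real n) = 2*pi * ?A / real n" using n by (simp add: field_simps)
    ultimately show ?thesis by simp
  qed
  hence "?g * (1 - 0) \<le> 2*pi * Lyap v \<alpha> E 0"
    using h_pos
    by (intro LIMSEQ_le[OF tendsto_mult[OF tendsto_const tendsto_diff[OF tendsto_const lim_inverse_n']]
          LIMSEQ_mean_log_Mn]) auto
  hence "ln (1 + 2*c) \<le> 4 * Lyap v \<alpha> E 0" by simp
  moreover have "0 < ln (1 + 2*c)" using c_pos by simp
  ultimately show ?thesis by linarith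
qed

end

context analytic_potential
begin

lemma energy_off_axis_if_not_real:
  assumes "E \<notin> \<real>"
  obtains \<sigma> c \<delta> B where "energy_off_axis v h E \<sigma> c \<delta> B"
proof -
  have Im_E: "Im E \<noteq> 0" using assms by (simp add: complex_is_Real_iff)
  define \<sigma> where "\<sigma> = (if 0 < Im E then 1 else -1 :: real)"
  define c where "c = \<bar>Im E\<bar> / 2"
  have c: "0 < c" using Im_E by (simp add: c_def)
  obtain \<delta> where \<delta>: "0 < \<delta>" "\<delta> < h" "\<And>z. \<bar>Im z\<bar> < \<delta> \<Longrightarrow> \<bar>Im (v z)\<bar> < c"
    using small_Im_v_near_real_axis[OF c] by blast
  obtain B where B: "0 \<le> B" "\<And>z. z \<in> strip h \<Longrightarrow> cmod (v z) \<le> B"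
    using bounded_v_obtain by blast
  have "energy_off_axis v h E \<sigma> c \<delta> B"
  proof unfold_locales
    show "\<sigma> = 1 \<or> \<sigma> = -1" by (simp add: \<sigma>_def)
    show "0 < c" "0 < \<delta>" "\<delta> \<le> h" "0 \<le> B" using c \<delta>(1,2) B(1) by simp_all
    show "cmod (v z) \<le> B" if "z \<in> strip h" for z using B(2)[OF that] .
    show "c \<le> \<sigma> * Im (E - v z)" if "\<bar>Im z\<bar> < \<delta>" for z
    proof -
      have "\<sigma> * Im (v z) < c" using \<delta>(3)[OF that] by (auto simp: \<sigma>_def)
      moreover have "\<sigma> * Im E = 2 * c" using Im_E by (auto simp: \<sigma>_def c_def)
      ultimately show ?thesis by (simp add: algebra_simps)
    qed
  qed
  thus ?thesis by (rule that)
qed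

lemma Lyap_constant_near_0:
  assumes "E \<notin> \<real>" shows "\<forall>\<^sub>F y in nhds 0. Lyap v \<alpha> E y = Lyap v \<alpha> E 0"
proof -
  obtain \<sigma> c \<delta> B where "energy_off_axis v h E \<sigma> c \<delta> B"
    using energy_off_axis_if_not_real[OF assms] by blast
  then interpret energy_off_axis v \<alpha> h E \<sigma> c \<delta> B .
  have "\<forall>\<^sub>F y in nhds 0. y \<in> ball 0 \<delta>" using delta_pos by (intro eventually_nhds_in_open) auto
  thus ?thesis by (rule eventually_mono) (intro Lyap_eq_Lyap_0, simp)
qed

text \<open>A convex function that is constant near \<open>0\<close> attains its minimum there.\<close>

lemma Lyap_pos:
  assumes E: "E \<notin> \<real>" and y: "\<bar>y\<bar> < h" shows "0 < Lyap v \<alpha> E y"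
proof -
  obtain \<sigma> c \<delta> B where "energy_off_axis v h E \<sigma> c \<delta> B"
    using energy_off_axis_if_not_real[OF E] by blast
  then interpret energy_off_axis v \<alpha> h E \<sigma> c \<delta> B .
  have "\<forall>y\<in>{-h<..<h}. Lyap v \<alpha> E 0 \<le> Lyap v \<alpha> E y"
  proof (rule convex_local_global_minimum[OF _ convex_on_Lyap])
    show "ball 0 (min \<delta> h) \<subseteq> {-h<..<h}" by (auto simp: dist_real_def)
    show "\<forall>y\<in>ball 0 (min \<delta> h). Lyap v \<alpha> E 0 \<le> Lyap v \<alpha> E y"
      using Lyap_eq_Lyap_0 by (auto simp: dist_real_def)
  qed (use delta_pos h_pos in auto)
  moreover have "y \<in> {-h<..<h}" using y by (simp add: abs_less_iff)
  ultimately show ?thesis using Lyap_0_pos by fastforce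
qed

end

theorem lemma5p2:
  fixes v :: "complex \<Rightarrow> complex" and \<alpha> h :: real
  assumes irr: "\<And>k::int. k \<noteq> 0 \<Longrightarrow> (\<nexists>m::int. real_of_int k * \<alpha> = 2 * pi * real_of_int m)"
    and hpos: "0 < h"
    and hol: "v holomorphic_on strip h"
    and per: "\<And>z. z \<in> strip h \<Longrightarrow> v (z + of_real (2 * pi)) = v z"
    and bdd: "bounded (v ` strip h)"
    and realv: "\<And>x::real. v (of_real x) \<in> \<real>"
  shows "(\<forall>E. E \<notin> \<real> \<longrightarrow>
            ((\<lambda>\<epsilon>. (Lyap v \<alpha> E \<epsilon> - Lyap v \<alpha> E 0) / \<epsilon>) \<longlongrightarrow> 0) (at_right 0) \<and>
            ((\<lambda>\<epsilon>. (Lyap v \<alpha> E \<epsilon> - Lyap v \<alpha> E 0) / \<epsilon>) \<longlongrightarrow> 0) (at_left 0))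
       \<and> (\<forall>y. \<bar>y\<bar> < h \<longrightarrow> {E. Lyap v \<alpha> E y = 0} \<subseteq> \<real>)"
proof -
  interpret analytic_potential v \<alpha> h
    using hpos hol per bdd realv by unfold_locales
  have quotient_zero: "\<forall>\<^sub>F \<epsilon> in at 0 within S. (Lyap v \<alpha> E \<epsilon> - Lyap v \<alpha> E 0) / \<epsilon> = 0"
    if "E \<notin> \<real>" for E and S :: "real set"
    using Lyap_constant_near_0[OF that] unfolding eventually_at_filter by (rule eventually_mono) simp
  show ?thesis
  proof (intro conjI allI impI subsetI)
    fix E :: complex assume E: "E \<notin> \<real>"
    show "((\<lambda>\<epsilon>. (Lyap v \<alpha> E \<epsilon> - Lyap v \<alpha> E 0) / \<epsilon>) \<longlongrightarrow> 0) (at_right 0)"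
      by (rule tendsto_eventually[OF quotient_zero[OF E]])
    show "((\<lambda>\<epsilon>. (Lyap v \<alpha> E \<epsilon> - Lyap v \<alpha> E 0) / \<epsilon>) \<longlongrightarrow> 0) (at_left 0)"
      by (rule tendsto_eventually[OF quotient_zero[OF E]])
  next
    fix y E assume "\<bar>y\<bar> < h" "E \<in> {E. Lyap v \<alpha> E y = 0}"
    thus "E \<in> \<real>" using Lyap_pos[of E y] by force
  qed
qed

end
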